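(* Let $\mathcal C$ be a small upper-triangular linear category. Then for all $i\ge0$ $$\operatorname{HH}_i(\mathcal C)\cong\bigoplus_{x\in\operatorname{Ob}(\mathcal C)}\operatorname{HH}_i(\mathcal C(x,x)),$$ where $\operatorname{HH}_i(\mathcal C(x,x))$ is the Hochschild homology of the endomorphism ring $\mathcal C(x,x)$.
   Context: A small linear category $\mathcal C$ is upper-triangular if there is a partial order $\le$ on $\operatorname{Ob}(\mathcal C)$ such that $\mathcal C(x,y)\neq0$ implies $x\le y$. The Hochschild–Mitchell complex of $\mathcal C$ has $C_n=\bigoplus_{x_0,\dots,x_n\in\operatorname{Ob}(\mathcal C)}\mathcal C(x_n,x_0)\otimes\mathcal C(x_{n-1},x_n)\otimes\dots\otimes\mathcal C(x_0,x_1)$ (tensor over $\mathbb Z$) with differential $d_n(f_n\otimes\dots\otimes f_0)=\sum_{i=0}^{n-1}(-1)^i f_n\otimes\dots\otimes f_{n-i}f_{n-i-1}\otimes\dots\otimes f_0+(-1)^n f_0f_n\otimes f_{n-1}\otimes\dots\otimes f_1$; $\operatorname{HH}_*(\mathcal C)$ is its homology. For a ring $R$ (a one-object linear category), this is the usual Hochschild complex $C_n(R)=R^{\otimes n+1}$. *)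

theory Defs
  imports "HOL-Algebra.Free_Abelian_Groups"
begin

text \<open>A small (Z-)linear category: a set of objects Ob, for each pair of objects an
abelian group Hm x y (written multiplicatively, as in HOL-Algebra), composition
cmp x y z g f = g o f for f in Hm x y and g in Hm y z, and identities idm x.\<close>

definition linear_category ::
  "'o set \<Rightarrow> ('o \<Rightarrow> 'o \<Rightarrow> 'm monoid) \<Rightarrow> ('o \<Rightarrow> 'o \<Rightarrow> 'o \<Rightarrow> 'm \<Rightarrow> 'm \<Rightarrow> 'm) \<Rightarrow> ('o \<Rightarrow> 'm) \<Rightarrow> bool"
  where "linear_category Ob Hm cmp idm \<longleftrightarrow>
    (\<forall>x\<in>Ob. \<forall>y\<in>Ob. comm_group (Hm x y)) \<and>
    (\<forall>x\<in>Ob. \<forall>y\<in>Ob. \<forall>z\<in>Ob. \<forall>f\<in>carrier (Hm x y). \<forall>g\<in>carrier (Hm y z).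
        cmp x y z g f \<in> carrier (Hm x z)) \<and>
    (\<forall>x\<in>Ob. idm x \<in> carrier (Hm x x)) \<and>
    (\<forall>w\<in>Ob. \<forall>x\<in>Ob. \<forall>y\<in>Ob. \<forall>z\<in>Ob. \<forall>f\<in>carrier (Hm w x). \<forall>g\<in>carrier (Hm x y).
        \<forall>h\<in>carrier (Hm y z). cmp w y z h (cmp w x y g f) = cmp w x z (cmp x y z h g) f) \<and>
    (\<forall>x\<in>Ob. \<forall>y\<in>Ob. \<forall>f\<in>carrier (Hm x y).
        cmp x y y (idm y) f = f \<and> cmp x x y f (idm x) = f) \<and>
    (\<forall>x\<in>Ob. \<forall>y\<in>Ob. \<forall>z\<in>Ob. \<forall>f\<in>carrier (Hm x y). \<forall>f'\<in>carrier (Hm x y).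
        \<forall>g\<in>carrier (Hm y z). \<forall>g'\<in>carrier (Hm y z).
        cmp x y z (g \<otimes>\<^bsub>Hm y z\<^esub> g') f = cmp x y z g f \<otimes>\<^bsub>Hm x z\<^esub> cmp x y z g' f \<and>
        cmp x y z g (f \<otimes>\<^bsub>Hm x y\<^esub> f') = cmp x y z g f \<otimes>\<^bsub>Hm x z\<^esub> cmp x y z g f')"

definition upper_triangular :: "'o set \<Rightarrow> ('o \<Rightarrow> 'o \<Rightarrow> 'm monoid) \<Rightarrow> bool"
  where "upper_triangular Ob Hm \<longleftrightarrow>
    (\<exists>r. partial_order_on Ob r \<and>
         (\<forall>x\<in>Ob. \<forall>y\<in>Ob. carrier (Hm x y) \<noteq> {\<one>\<^bsub>Hm x y\<^esub>} \<longrightarrow> (x, y) \<in> r))"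

text \<open>Generators of C_n: pairs (xs, fs) with xs = [x_0,...,x_n] and fs = [f_0,...,f_n],
  f_k \<in> C(x_k, x_{k+1}) for k < n and f_n \<in> C(x_n, x_0) (indices mod n+1).
  (xs, fs) stands for the elementary tensor f_n \<otimes> ... \<otimes> f_0 in the summand indexed by xs.\<close>

definition hm_gens :: "'o set \<Rightarrow> ('o \<Rightarrow> 'o \<Rightarrow> 'm monoid) \<Rightarrow> nat \<Rightarrow> ('o list \<times> 'm list) set"
  where "hm_gens Ob Hm n = {(xs, fs). length xs = Suc n \<and> length fs = Suc n \<and> set xs \<subseteq> Ob \<and>
     (\<forall>k<Suc n. fs ! k \<in> carrier (Hm (xs ! k) (xs ! (Suc k mod Suc n))))}"

definition hm_free :: "'o set \<Rightarrow> ('o \<Rightarrow> 'o \<Rightarrow> 'm monoid) \<Rightarrow> nat \<Rightarrow> (('o list \<times> 'm list) \<Rightarrow>\<^sub>0 int) monoid"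
  where "hm_free Ob Hm n = free_Abelian_group (hm_gens Ob Hm n)"

definition hm_rels :: "'o set \<Rightarrow> ('o \<Rightarrow> 'o \<Rightarrow> 'm monoid) \<Rightarrow> nat \<Rightarrow> (('o list \<times> 'm list) \<Rightarrow>\<^sub>0 int) set"
  where "hm_rels Ob Hm n =
    {frag_of (xs, fs[k := a \<otimes>\<^bsub>Hm (xs ! k) (xs ! (Suc k mod Suc n))\<^esub> b])
       - frag_of (xs, fs[k := a]) - frag_of (xs, fs[k := b]) | xs fs k a b.
       (xs, fs) \<in> hm_gens Ob Hm n \<and> k < Suc n \<and>
       a \<in> carrier (Hm (xs ! k) (xs ! (Suc k mod Suc n))) \<and>
       b \<in> carrier (Hm (xs ! k) (xs ! (Suc k mod Suc n)))}"

definition hm_chains :: "'o set \<Rightarrow> ('o \<Rightarrow> 'o \<Rightarrow> 'm monoid) \<Rightarrow> nat \<Rightarrow> (('o list \<times> 'm list) \<Rightarrow>\<^sub>0 int) set monoid"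
  where "hm_chains Ob Hm n =
    hm_free Ob Hm n Mod generate (hm_free Ob Hm n) (hm_rels Ob Hm n)"

text \<open>Faces of an elementary tensor in degree n \<ge> 1.
  hm_face j (1 \<le> j \<le> n): replaces f_j, f_{j-1} by f_j f_{j-1} (deleting x_j);
  it is the term i = n - j of the differential, with sign (-1)^i.
  hm_lastface: the term f_0 f_n \<otimes> f_{n-1} \<otimes> ... \<otimes> f_1, sign (-1)^n.\<close>

definition hm_face :: "('o \<Rightarrow> 'o \<Rightarrow> 'o \<Rightarrow> 'm \<Rightarrow> 'm \<Rightarrow> 'm) \<Rightarrow> nat \<Rightarrow> nat \<Rightarrow> 'o list \<times> 'm list \<Rightarrow> 'o list \<times> 'm list"
  where "hm_face cmp n j t = (case t of (xs, fs) \<Rightarrow>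
     (take j xs @ drop (Suc j) xs,
      take (j - 1) fs @
        [cmp (xs ! (j - 1)) (xs ! j) (xs ! (Suc j mod Suc n)) (fs ! j) (fs ! (j - 1))] @
        drop (Suc j) fs))"

definition hm_lastface :: "('o \<Rightarrow> 'o \<Rightarrow> 'o \<Rightarrow> 'm \<Rightarrow> 'm \<Rightarrow> 'm) \<Rightarrow> nat \<Rightarrow> 'o list \<times> 'm list \<Rightarrow> 'o list \<times> 'm list"
  where "hm_lastface cmp n t = (case t of (xs, fs) \<Rightarrow>
     (tl xs, take (n - 1) (tl fs) @ [cmp (xs ! n) (xs ! 0) (xs ! 1) (fs ! 0) (fs ! n)]))"

definition hm_bd_gen :: "('o \<Rightarrow> 'o \<Rightarrow> 'o \<Rightarrow> 'm \<Rightarrow> 'm \<Rightarrow> 'm) \<Rightarrow> nat \<Rightarrow> 'o list \<times> 'm list \<Rightarrow> ('o list \<times> 'm list) \<Rightarrow>\<^sub>0 int"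
  where "hm_bd_gen cmp n t =
     (\<Sum>i<n. frag_cmul ((-1) ^ i) (frag_of (hm_face cmp n (n - i) t)))
     + frag_cmul ((-1) ^ n) (frag_of (hm_lastface cmp n t))"

definition hm_d :: "'o set \<Rightarrow> ('o \<Rightarrow> 'o \<Rightarrow> 'm monoid) \<Rightarrow> ('o \<Rightarrow> 'o \<Rightarrow> 'o \<Rightarrow> 'm \<Rightarrow> 'm \<Rightarrow> 'm) \<Rightarrow> nat
     \<Rightarrow> (('o list \<times> 'm list) \<Rightarrow>\<^sub>0 int) set \<Rightarrow> (('o list \<times> 'm list) \<Rightarrow>\<^sub>0 int) set"
  where "hm_d Ob Hm cmp n X =
     (\<Union>c\<in>X. generate (hm_free Ob Hm (n - 1)) (hm_rels Ob Hm (n - 1))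
                #>\<^bsub>hm_free Ob Hm (n - 1)\<^esub> frag_extend (hm_bd_gen cmp n) c)"

text \<open>Cycles (Z_0 = C_0 since d_0 = 0) and Hochschild-Mitchell homology HH_n = Z_n / im d_{n+1}.\<close>

definition hm_cycles :: "'o set \<Rightarrow> ('o \<Rightarrow> 'o \<Rightarrow> 'm monoid) \<Rightarrow> ('o \<Rightarrow> 'o \<Rightarrow> 'o \<Rightarrow> 'm \<Rightarrow> 'm \<Rightarrow> 'm) \<Rightarrow> nat
     \<Rightarrow> (('o list \<times> 'm list) \<Rightarrow>\<^sub>0 int) set set"
  where "hm_cycles Ob Hm cmp n =
    (if n = 0 then carrier (hm_chains Ob Hm 0)
     else kernel (hm_chains Ob Hm n) (hm_chains Ob Hm (n - 1)) (hm_d Ob Hm cmp n))"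

definition HH :: "'o set \<Rightarrow> ('o \<Rightarrow> 'o \<Rightarrow> 'm monoid) \<Rightarrow> ('o \<Rightarrow> 'o \<Rightarrow> 'o \<Rightarrow> 'm \<Rightarrow> 'm \<Rightarrow> 'm) \<Rightarrow> nat
     \<Rightarrow> (('o list \<times> 'm list) \<Rightarrow>\<^sub>0 int) set set monoid"
  where "HH Ob Hm cmp n =
    (hm_chains Ob Hm n)\<lparr>carrier := hm_cycles Ob Hm cmp n\<rparr>
      Mod (hm_d Ob Hm cmp (Suc n) ` carrier (hm_chains Ob Hm (Suc n)))"

text \<open>Hochschild homology of the endomorphism ring C(x,x), viewed (as in the paper)
  as the one-object linear category with object x.\<close>

definition HH_endo :: "('o \<Rightarrow> 'o \<Rightarrow> 'm monoid) \<Rightarrow> ('o \<Rightarrow> 'o \<Rightarrow> 'o \<Rightarrow> 'm \<Rightarrow> 'm \<Rightarrow> 'm) \<Rightarrow> 'o \<Rightarrow> nat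
     \<Rightarrow> (('o list \<times> 'm list) \<Rightarrow>\<^sub>0 int) set set monoid"
  where "HH_endo Hm cmp x n = HH {x} Hm cmp n"

end

theory Submission
  imports Defs
begin

(* The chain group C_n is the free abelian group on the generators hm_gens modulo the Z-span of
   the multilinearity relations, so we compute with representatives: HH_n is the image of the
   group of representative cycles under the map hclass, whose kernel consists of the cycles that
   are boundaries modulo relations (hclass_kernel).

   A generator (x_0..x_n, f_0..f_n) is diagonal at x if all x_k equal x.  If it is not diagonal,
   upper-triangularity forces some Hom group C(x_k, x_(k+1)) along the cycle to vanish, so the
   generator lies in the span of the relations (nondiag_gen_in_rel_span).  Hence taking the
   diagonal part at x commutes with the boundary up to relations, and the comparison map
   c |-> (class of diag_part x c)_x from representative cycles to the direct sum of the
   HH_n(C(x,x)) is a surjective homomorphism with the same kernel as hclass (diag_map_surj,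
   diag_map_kernel).  Two surjections out of one group with equal kernels have isomorphic
   targets (iso_of_common_kernel), which gives the theorem. *)

section \<open>Z-spans of fragments\<close>

text \<open>The subgroup of integer fragments generated by a set; it coincides with the generated
  subgroup of any free abelian group containing the generators (generate_free_zspan), but is
  easier to reason about by induction.\<close>

inductive_set zspan :: "('a \<Rightarrow>\<^sub>0 int) set \<Rightarrow> ('a \<Rightarrow>\<^sub>0 int) set" for H where
  zero: "0 \<in> zspan H"
| gen: "h \<in> H \<Longrightarrow> h \<in> zspan H"
| diff: "a \<in> zspan H \<Longrightarrow> b \<in> zspan H \<Longrightarrow> a - b \<in> zspan H"

lemma zspan_uminus: "a \<in> zspan H \<Longrightarrow> - a \<in> zspan H"
  using zspan.diff[OF zspan.zero] by fastforce

lemma zspan_add: "a \<in> zspan H \<Longrightarrow> b \<in> zspan H \<Longrightarrow> a + b \<in> zspan H"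
  by (metis diff_minus_eq_add zspan.diff zspan_uminus)

lemma sum_mem_closed:
  assumes "0 \<in> A" "\<And>a b. a \<in> A \<Longrightarrow> b \<in> A \<Longrightarrow> a + b \<in> A" "\<And>i. i \<in> I \<Longrightarrow> f i \<in> A"
  shows "sum f I \<in> A"
  using assms(3) by (induction I rule: infinite_finite_induct) (auto simp: assms(1,2))

lemma zspan_sum: "(\<And>i. i \<in> I \<Longrightarrow> f i \<in> zspan H) \<Longrightarrow> sum f I \<in> zspan H"
  by (rule sum_mem_closed) (auto intro: zspan.zero zspan_add)

lemma zspan_cmul: "a \<in> zspan H \<Longrightarrow> frag_cmul c a \<in> zspan H"
  by (rule frag_closure_minus_cmul) (auto intro: zspan.intros)

lemma zspan_mono: "a \<in> zspan H \<Longrightarrow> H \<subseteq> K \<Longrightarrow> a \<in> zspan K"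
  by (induction a rule: zspan.induct) (auto intro: zspan.intros)

lemma zspan_keys:
  "a \<in> zspan H \<Longrightarrow> (\<And>h. h \<in> H \<Longrightarrow> Poly_Mapping.keys h \<subseteq> T) \<Longrightarrow> Poly_Mapping.keys a \<subseteq> T"
  by (induction a rule: zspan.induct) (auto dest: subsetD[OF keys_diff])

lemma zspan_frag_extend:
  assumes "\<And>h. h \<in> H \<Longrightarrow> frag_extend f h \<in> zspan K" and "a \<in> zspan H"
  shows "frag_extend f a \<in> zspan K"
  using assms(2) by (induction a rule: zspan.induct)
    (auto simp: assms(1) frag_extend_diff intro: zspan.intros)

lemma generate_free_zspan:
  assumes keys: "\<And>h. h \<in> H \<Longrightarrow> Poly_Mapping.keys h \<subseteq> T"
  shows "generate (free_Abelian_group T) H = zspan H"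
proof
  show "generate (free_Abelian_group T) H \<subseteq> zspan H"
  proof
    fix x assume "x \<in> generate (free_Abelian_group T) H"
    then show "x \<in> zspan H"
      by (induction x rule: generate.induct)
         (auto simp: keys zspan.intros zspan_uminus zspan_add)
  qed
  have sg: "subgroup (generate (free_Abelian_group T) H) (free_Abelian_group T)"
    by (rule group.generate_is_subgroup) (auto simp: keys)
  show "zspan H \<subseteq> generate (free_Abelian_group T) H"
  proof
    fix x assume "x \<in> zspan H"
    then show "x \<in> generate (free_Abelian_group T) H"
    proof (induction x rule: zspan.induct)
      case zero
      then show ?case using generate.one[of "free_Abelian_group T" H] by simp
    next
      case (gen h)
      then show ?case by (rule generate.incl)
    next
      case (diff a b)
      have "Poly_Mapping.keys b \<subseteq> T"
        using diff(2) keys by (rule zspan_keys)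
      then show ?case
        using diff sg subgroup.m_closed subgroup.m_inv_closed by fastforce
    qed
  qed
qed

definition rcos :: "('a \<Rightarrow>\<^sub>0 int) set \<Rightarrow> ('a \<Rightarrow>\<^sub>0 int) \<Rightarrow> ('a \<Rightarrow>\<^sub>0 int) set"
  where "rcos R a = (\<lambda>r. r + a) ` R"

lemma rcos_free: "r_coset (free_Abelian_group T) R a = rcos R a"
  by (auto simp: r_coset_def rcos_def)

lemma rcos_self: "a \<in> rcos (zspan H) a"
  unfolding rcos_def by (rule image_eqI[of _ _ 0]) (auto intro: zspan.zero)

lemma rcos_eq: "rcos (zspan H) a = rcos (zspan H) b \<longleftrightarrow> a - b \<in> zspan H"
proof
  assume "rcos (zspan H) a = rcos (zspan H) b"
  then have "a \<in> rcos (zspan H) b" using rcos_self by metis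
  then show "a - b \<in> zspan H" by (auto simp: rcos_def)
next
  assume d: "a - b \<in> zspan H"
  show "rcos (zspan H) a = rcos (zspan H) b"
  proof (auto simp: rcos_def)
    fix r assume "r \<in> zspan H"
    then show "r + a \<in> (\<lambda>r. r + b) ` zspan H"
      using d by (intro image_eqI[of _ _ "r + (a - b)"]) (auto intro: zspan_add)
  next
    fix r assume "r \<in> zspan H"
    then show "r + b \<in> (\<lambda>r. r + a) ` zspan H"
      using d by (intro image_eqI[of _ _ "r - (a - b)"]) (auto intro: zspan.diff)
  qed
qed

lemma rcos_mult:
  "set_mult (free_Abelian_group T) (rcos (zspan H) a) (rcos (zspan H) b) = rcos (zspan H) (a + b)"
proof (intro equalityI subsetI)
  fix x assume "x \<in> set_mult (free_Abelian_group T) (rcos (zspan H) a) (rcos (zspan H) b)"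
  then obtain r s where "r \<in> zspan H" "s \<in> zspan H" "x = (r + a) + (s + b)"
    by (auto simp: set_mult_def rcos_def)
  then show "x \<in> rcos (zspan H) (a + b)"
    unfolding rcos_def by (intro image_eqI[of _ _ "r + s"]) (auto intro: zspan_add)
next
  fix x assume "x \<in> rcos (zspan H) (a + b)"
  then obtain r where r: "r \<in> zspan H" "x = (r + a) + b" by (auto simp: rcos_def add.assoc)
  have "r + a \<in> rcos (zspan H) a" using r by (auto simp: rcos_def)
  then show "x \<in> set_mult (free_Abelian_group T) (rcos (zspan H) a) (rcos (zspan H) b)"
    unfolding set_mult_def using r rcos_self[of b H] by force
qed

lemma comm_group_from_frags:
  fixes M :: "('b, 'c) monoid_scheme"
  assumes Z0: "0 \<in> Z" and Zadd: "\<And>a b. a \<in> Z \<Longrightarrow> b \<in> Z \<Longrightarrow> a + b \<in> Z"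
    and Zneg: "\<And>a. a \<in> Z \<Longrightarrow> - a \<in> Z"
    and car: "carrier M = q ` Z"
    and mult: "\<And>a b. a \<in> Z \<Longrightarrow> b \<in> Z \<Longrightarrow> q a \<otimes>\<^bsub>M\<^esub> q b = q (a + b)"
    and one: "\<one>\<^bsub>M\<^esub> = q (0 :: 'a \<Rightarrow>\<^sub>0 int)"
  shows "comm_group M"
proof (rule comm_groupI)
  fix x y z assume "x \<in> carrier M" and "y \<in> carrier M" and "z \<in> carrier M"
  then obtain a b c where a: "a \<in> Z" "x = q a" and b: "b \<in> Z" "y = q b" and c: "c \<in> Z" "z = q c"
    using car by auto
  show "x \<otimes>\<^bsub>M\<^esub> y \<in> carrier M" using a b by (simp add: mult car Zadd)
  show "x \<otimes>\<^bsub>M\<^esub> y \<otimes>\<^bsub>M\<^esub> z = x \<otimes>\<^bsub>M\<^esub> (y \<otimes>\<^bsub>M\<^esub> z)"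
    using a b c by (simp add: mult Zadd add.assoc)
  show "x \<otimes>\<^bsub>M\<^esub> y = y \<otimes>\<^bsub>M\<^esub> x" using a b by (simp add: mult add.commute)
  show "\<one>\<^bsub>M\<^esub> \<otimes>\<^bsub>M\<^esub> x = x" using a by (simp add: one mult Z0)
  show "\<exists>y\<in>carrier M. y \<otimes>\<^bsub>M\<^esub> x = \<one>\<^bsub>M\<^esub>"
    using a by (intro bexI[of _ "q (- a)"]) (auto simp: one mult Zneg car)
next
  show "\<one>\<^bsub>M\<^esub> \<in> carrier M" using car one Z0 by simp
qed

lemma iso_of_common_kernel:
  assumes f: "group_hom G H f" and g: "group_hom G K g"
    and f_onto: "f ` carrier G = carrier H" and g_onto: "g ` carrier G = carrier K"
    and ker: "kernel G H f = kernel G K g"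
  shows "H \<cong> K"
proof -
  have "G Mod kernel G H f \<cong> H" by (rule group_hom.FactGroup_iso[OF f f_onto])
  moreover have "G Mod kernel G H f \<cong> K"
    using group_hom.FactGroup_iso[OF g g_onto] ker by simp
  moreover have "group (G Mod kernel G H f)"
    by (rule normal.factorgroup_is_group[OF group_hom.normal_kernel[OF f]])
  ultimately show ?thesis by (meson group.iso_sym iso_trans)
qed

lemma hm_face_length:
  assumes "length xs = Suc n" "length fs = Suc n" "1 \<le> j" "j \<le> n"
  shows "length (fst (hm_face cmp n j (xs, fs))) = n" "length (snd (hm_face cmp n j (xs, fs))) = n"
  using assms by (auto simp: hm_face_def)

lemma hm_face_objects:
  "length xs = Suc n \<Longrightarrow> 1 \<le> j \<Longrightarrow> j \<le> n \<Longrightarrow> i < n \<Longrightarrow>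
   fst (hm_face cmp n j (xs, fs)) ! i = (if i < j then xs ! i else xs ! Suc i)"
  by (auto simp: hm_face_def nth_append)

lemma hm_face_objects_next:
  assumes "length xs = Suc n" "1 \<le> j" "j \<le> n" "k < n"
  shows "fst (hm_face cmp n j (xs, fs)) ! (Suc k mod n) =
    xs ! (Suc (if k < j - 1 then k else Suc k) mod Suc n)"
proof (cases "Suc k = n")
  case True
  then show ?thesis using assms hm_face_objects[OF assms(1-3), of 0 cmp fs] by auto
next
  case False
  then show ?thesis using assms hm_face_objects[OF assms(1-3), of "Suc k" cmp fs] by auto
qed

lemma hm_face_arrows:
  assumes "length fs = Suc n" "1 \<le> j" "j \<le> n" "k < n"
  shows "snd (hm_face cmp n j (xs, fs)) ! k =
    (if k < j - 1 then fs ! k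
     else if k = j - 1 then cmp (xs ! (j - 1)) (xs ! j) (xs ! (Suc j mod Suc n)) (fs ! j) (fs ! (j - 1))
     else fs ! Suc k)"
  using assms by (auto simp: hm_face_def nth_append)

lemma hm_lastface_objects:
  "length xs = Suc n \<Longrightarrow> i < n \<Longrightarrow> fst (hm_lastface cmp n (xs, fs)) ! i = xs ! Suc i"
  by (auto simp: hm_lastface_def nth_tl)

lemma hm_lastface_arrows:
  assumes "length fs = Suc n" "1 \<le> n" "k < n"
  shows "snd (hm_lastface cmp n (xs, fs)) ! k =
    (if k = n - 1 then cmp (xs ! n) (xs ! 0) (xs ! 1) (fs ! 0) (fs ! n) else fs ! Suc k)"
  using assms by (auto simp: hm_lastface_def nth_append nth_tl)

lemma hm_face_update_before:
  assumes "k < j - 1" "j \<le> n" "length fs = Suc n"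
  shows "hm_face cmp n j (xs, fs[k:=v]) =
    (fst (hm_face cmp n j (xs,fs)), (snd (hm_face cmp n j (xs,fs)))[k := v])"
  using assms by (auto simp: hm_face_def list_eq_iff_nth_eq nth_append nth_list_update)

lemma hm_face_update_after:
  assumes "j < k" "k \<le> n" "length fs = Suc n" "1 \<le> j"
  shows "hm_face cmp n j (xs, fs[k:=v]) =
    (fst (hm_face cmp n j (xs,fs)), (snd (hm_face cmp n j (xs,fs)))[k - 1 := v])"
  using assms
  by (auto simp: hm_face_def list_eq_iff_nth_eq nth_append nth_list_update nth_Cons' nth_drop)

lemma hm_face_update_right_factor:
  assumes "1 \<le> j" "j \<le> n" "length fs = Suc n"
  shows "hm_face cmp n j (xs, fs[j - 1:=v]) =
    (fst (hm_face cmp n j (xs,fs)), (snd (hm_face cmp n j (xs,fs)))[j - 1 :=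
       cmp (xs ! (j - 1)) (xs ! j) (xs ! (Suc j mod Suc n)) (fs ! j) v])"
  using assms by (auto simp: hm_face_def list_eq_iff_nth_eq nth_append nth_list_update)

lemma hm_face_update_left_factor:
  assumes "1 \<le> j" "j \<le> n" "length fs = Suc n"
  shows "hm_face cmp n j (xs, fs[j:=v]) =
    (fst (hm_face cmp n j (xs,fs)), (snd (hm_face cmp n j (xs,fs)))[j - 1 :=
       cmp (xs ! (j - 1)) (xs ! j) (xs ! (Suc j mod Suc n)) v (fs ! (j - 1))])"
  using assms by (auto simp: hm_face_def list_eq_iff_nth_eq nth_append nth_list_update)

lemma hm_lastface_update_first:
  assumes "1 \<le> n" "length fs = Suc n"
  shows "hm_lastface cmp n (xs, fs[0:=v]) =
    (fst (hm_lastface cmp n (xs,fs)), (snd (hm_lastface cmp n (xs,fs)))[n - 1 :=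
       cmp (xs ! n) (xs ! 0) (xs ! 1) v (fs ! n)])"
  using assms by (auto simp: hm_lastface_def list_eq_iff_nth_eq nth_append nth_list_update nth_tl)

lemma hm_lastface_update_last:
  assumes "1 \<le> n" "length fs = Suc n"
  shows "hm_lastface cmp n (xs, fs[n:=v]) =
    (fst (hm_lastface cmp n (xs,fs)), (snd (hm_lastface cmp n (xs,fs)))[n - 1 :=
       cmp (xs ! n) (xs ! 0) (xs ! 1) (fs ! 0) v])"
  using assms by (auto simp: hm_lastface_def list_eq_iff_nth_eq nth_append nth_list_update nth_tl)

lemma hm_lastface_update_middle:
  assumes "1 \<le> k" "k < n" "length fs = Suc n"
  shows "hm_lastface cmp n (xs, fs[k:=v]) =
    (fst (hm_lastface cmp n (xs,fs)), (snd (hm_lastface cmp n (xs,fs)))[k - 1 := v])"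
  using assms by (auto simp: hm_lastface_def list_eq_iff_nth_eq nth_append nth_list_update nth_tl)

locale lin_cat =
  fixes Ob :: "'o set" and Hm :: "'o \<Rightarrow> 'o \<Rightarrow> 'm monoid"
    and cmp :: "'o \<Rightarrow> 'o \<Rightarrow> 'o \<Rightarrow> 'm \<Rightarrow> 'm \<Rightarrow> 'm" and idm :: "'o \<Rightarrow> 'm"
  assumes LC: "linear_category Ob Hm cmp idm"
begin

lemma hom_group: "x \<in> Ob \<Longrightarrow> y \<in> Ob \<Longrightarrow> comm_group (Hm x y)"
  using LC by (simp add: linear_category_def)

lemma cmp_closed:
  "x \<in> Ob \<Longrightarrow> y \<in> Ob \<Longrightarrow> z \<in> Ob \<Longrightarrow> f \<in> carrier (Hm x y) \<Longrightarrow> g \<in> carrier (Hm y z)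
   \<Longrightarrow> cmp x y z g f \<in> carrier (Hm x z)"
  using LC by (simp add: linear_category_def)

lemma cmp_additive_left:
  "x \<in> Ob \<Longrightarrow> y \<in> Ob \<Longrightarrow> z \<in> Ob \<Longrightarrow> f \<in> carrier (Hm x y) \<Longrightarrow> g \<in> carrier (Hm y z)
   \<Longrightarrow> g' \<in> carrier (Hm y z)
   \<Longrightarrow> cmp x y z (g \<otimes>\<^bsub>Hm y z\<^esub> g') f = cmp x y z g f \<otimes>\<^bsub>Hm x z\<^esub> cmp x y z g' f"
  using LC unfolding linear_category_def by blast

lemma cmp_additive_right:
  "x \<in> Ob \<Longrightarrow> y \<in> Ob \<Longrightarrow> z \<in> Ob \<Longrightarrow> f \<in> carrier (Hm x y) \<Longrightarrow> f' \<in> carrier (Hm x y)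
   \<Longrightarrow> g \<in> carrier (Hm y z)
   \<Longrightarrow> cmp x y z g (f \<otimes>\<^bsub>Hm x y\<^esub> f') = cmp x y z g f \<otimes>\<^bsub>Hm x z\<^esub> cmp x y z g f'"
  using LC unfolding linear_category_def by blast

lemma hm_gensD:
  assumes "(xs, fs) \<in> hm_gens Ob Hm n"
  shows "length xs = Suc n" "length fs = Suc n" "\<And>i. i < Suc n \<Longrightarrow> xs ! i \<in> Ob"
    "\<And>k. k < Suc n \<Longrightarrow> fs ! k \<in> carrier (Hm (xs ! k) (xs ! (Suc k mod Suc n)))"
  using assms by (auto simp: hm_gens_def dest!: nth_mem)

lemma hm_face_gen:
  assumes t: "(xs, fs) \<in> hm_gens Ob Hm n" and j: "1 \<le> j" "j \<le> n"
  shows "hm_face cmp n j (xs, fs) \<in> hm_gens Ob Hm (n - 1)"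
proof -
  note P = hm_gensD[OF t]
  obtain xs' fs' where face: "hm_face cmp n j (xs, fs) = (xs', fs')" by fastforce
  have L: "length xs' = n" "length fs' = n" using hm_face_length[OF P(1,2) j, of cmp] face by auto
  have X: "set xs' \<subseteq> Ob"
    using t face by (auto simp: hm_gens_def hm_face_def dest!: in_set_takeD in_set_dropD)
  have "fs' ! k \<in> carrier (Hm (xs' ! k) (xs' ! (Suc k mod n)))" if k: "k < n" for k
  proof -
    have cur: "xs' ! k = (if k < j then xs ! k else xs ! Suc k)"
      using hm_face_objects[OF P(1) j k, of cmp fs] face by simp
    have nxt: "xs' ! (Suc k mod n) = xs ! (Suc (if k < j - 1 then k else Suc k) mod Suc n)"
      using hm_face_objects_next[OF P(1) j k, of cmp fs] face by simp
    have arr: "fs' ! k = (if k < j - 1 then fs ! k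
        else if k = j - 1 then cmp (xs ! (j - 1)) (xs ! j) (xs ! (Suc j mod Suc n)) (fs ! j) (fs ! (j - 1))
        else fs ! Suc k)"
      using hm_face_arrows[OF P(2) j k, where cmp=cmp and xs=xs] face by simp
    consider "k < j - 1" | "k = j - 1" | "j - 1 < k" by linarith
    then show ?thesis
    proof cases
      case 1
      then show ?thesis using cur nxt arr P(4)[of k] k by auto
    next
      case 2
      then show ?thesis
        using cur nxt arr j P(3) P(4)[of "j - 1"] P(4)[of j] by (auto intro!: cmp_closed)
    next
      case 3
      then show ?thesis using cur nxt arr P(4)[of "Suc k"] k by auto
    qed
  qed
  then show ?thesis using face L X j by (auto simp: hm_gens_def)
qed

lemma hm_lastface_gen:
  assumes t: "(xs, fs) \<in> hm_gens Ob Hm n" and n: "1 \<le> n"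
  shows "hm_lastface cmp n (xs, fs) \<in> hm_gens Ob Hm (n - 1)"
proof -
  note P = hm_gensD[OF t]
  obtain xs' fs' where face: "hm_lastface cmp n (xs, fs) = (xs', fs')" by fastforce
  have L: "length xs' = n" "length fs' = n" using face P(1,2) n by (auto simp: hm_lastface_def)
  have X: "set xs' \<subseteq> Ob" using t face by (cases xs) (auto simp: hm_gens_def hm_lastface_def)
  have "fs' ! k \<in> carrier (Hm (xs' ! k) (xs' ! (Suc k mod n)))" if k: "k < n" for k
  proof -
    have obj: "\<And>i. i < n \<Longrightarrow> xs' ! i = xs ! Suc i"
      using hm_lastface_objects[OF P(1), of _ cmp fs] face by simp
    have arr: "fs' ! k = (if k = n - 1 then cmp (xs ! n) (xs ! 0) (xs ! 1) (fs ! 0) (fs ! n) else fs ! Suc k)"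
      using hm_lastface_arrows[OF P(2) n k, where cmp=cmp and xs=xs] face by simp
    show ?thesis
    proof (cases "k = n - 1")
      case True
      then show ?thesis
        using obj[of "n - 1"] obj[of 0] arr n P(3) P(4)[of 0] P(4)[of n] by (auto intro!: cmp_closed)
    next
      case False
      then show ?thesis using obj[of k] obj[of "Suc k"] arr k P(4)[of "Suc k"] by auto
    qed
  qed
  then show ?thesis using face L X n by (auto simp: hm_gens_def)
qed

end

definition rel_span :: "'o set \<Rightarrow> ('o \<Rightarrow> 'o \<Rightarrow> 'm monoid) \<Rightarrow> nat \<Rightarrow> (('o list \<times> 'm list) \<Rightarrow>\<^sub>0 int) set"
  where "rel_span Ob Hm n = zspan (hm_rels Ob Hm n)"

definition bd :: "('o \<Rightarrow> 'o \<Rightarrow> 'o \<Rightarrow> 'm \<Rightarrow> 'm \<Rightarrow> 'm) \<Rightarrow> nat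
    \<Rightarrow> (('o list \<times> 'm list) \<Rightarrow>\<^sub>0 int) \<Rightarrow> (('o list \<times> 'm list) \<Rightarrow>\<^sub>0 int)"
  where "bd cmp n = frag_extend (hm_bd_gen cmp n)"

lemma bd_add: "bd cmp n (a + b) = bd cmp n a + bd cmp n b"
  by (simp add: bd_def frag_extend_add)

lemma bd_diff: "bd cmp n (a - b) = bd cmp n a - bd cmp n b"
  by (simp add: bd_def frag_extend_diff)

lemma bd_0: "bd cmp n 0 = 0"
  by (simp add: bd_def)

lemma bd_minus: "bd cmp n (- a) = - bd cmp n a"
  by (simp add: bd_def frag_extend_minus)

lemma rel_span_0: "0 \<in> rel_span Ob Hm n"
  by (simp add: rel_span_def zspan.zero)

lemma rel_span_add: "a \<in> rel_span Ob Hm n \<Longrightarrow> b \<in> rel_span Ob Hm n \<Longrightarrow> a + b \<in> rel_span Ob Hm n"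
  by (simp add: rel_span_def zspan_add)

lemma rel_span_diff: "a \<in> rel_span Ob Hm n \<Longrightarrow> b \<in> rel_span Ob Hm n \<Longrightarrow> a - b \<in> rel_span Ob Hm n"
  by (simp add: rel_span_def zspan.diff)

lemma rel_span_uminus: "a \<in> rel_span Ob Hm n \<Longrightarrow> - a \<in> rel_span Ob Hm n"
  by (simp add: rel_span_def zspan_uminus)

text \<open>This is how each face of the
  differential is shown to respect the relations.\<close>

lemma rel_transport:
  assumes gen: "(xs', fs') \<in> hm_gens Ob Hm m" and p: "p < Suc m"
    and G: "G = Hm (xs' ! p) (xs' ! (Suc p mod Suc m))"
    and gab: "g a \<in> carrier G" "g b \<in> carrier G"
    and hom: "g (a \<otimes>\<^bsub>H\<^esub> b) = g a \<otimes>\<^bsub>G\<^esub> g b"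
    and F: "\<And>v. F v = (xs', fs'[p := g v])"
  shows "frag_of (F (a \<otimes>\<^bsub>H\<^esub> b)) - frag_of (F a) - frag_of (F b) \<in> zspan (hm_rels Ob Hm m)"
  unfolding F hom by (rule zspan.gen) (use gen p G gab in \<open>unfold hm_rels_def; blast\<close>)

lemma frag_cmul_diff_right: "frag_cmul c (a - b) = frag_cmul c a - frag_cmul c b"
  by (rule poly_mapping_eqI) (simp add: lookup_minus algebra_simps)

context lin_cat
begin

lemma hm_face_rel_untouched:
  assumes t: "(xs, fs) \<in> hm_gens Ob Hm n" and j: "1 \<le> j" "j \<le> n" and k: "k < Suc n"
    and kj: "k < j - 1 \<or> j < k"
    and ab: "a \<in> carrier H" "b \<in> carrier H" and H: "H = Hm (xs ! k) (xs ! (Suc k mod Suc n))"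
  shows "frag_of (hm_face cmp n j (xs, fs[k := a \<otimes>\<^bsub>H\<^esub> b]))
       - frag_of (hm_face cmp n j (xs, fs[k := a])) - frag_of (hm_face cmp n j (xs, fs[k := b]))
       \<in> zspan (hm_rels Ob Hm (n - 1))"
proof -
  note P = hm_gensD[OF t]
  obtain xs' fs' where face: "hm_face cmp n j (xs, fs) = (xs', fs')" by fastforce
  have g': "(xs', fs') \<in> hm_gens Ob Hm (n - 1)" using hm_face_gen[OF t j] face by simp
  define p where "p = (if k < j - 1 then k else k - 1)"
  have p: "p < n" using kj k j by (auto simp: p_def)
  have upd: "hm_face cmp n j (xs, fs[k := v]) = (xs', fs'[p := v])" for v
  proof (cases "k < j - 1")
    case True
    then show ?thesis
      using hm_face_update_before[OF True j(2) P(2), where cmp=cmp and xs=xs] face by (simp add: p_def)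
  next
    case False
    then have "j < k" using kj by simp
    then show ?thesis
      using hm_face_update_after[OF _ _ P(2) j(1), where cmp=cmp and xs=xs] k face False
      by (simp add: p_def)
  qed
  have "xs' ! p = xs ! k" "xs' ! (Suc p mod n) = xs ! (Suc k mod Suc n)"
    using kj k j hm_face_objects[OF P(1) j p, of cmp fs] hm_face_objects_next[OF P(1) j p, of cmp fs] face
    by (auto simp: p_def)
  then show ?thesis
    using p j ab by (intro rel_transport[OF g', where G=H and g="\<lambda>v. v"]) (auto simp: H upd)
qed

text \<open>A face that composes the modified factor with its neighbour: additivity of composition
  turns the relation into a relation for the composite.\<close>

lemma hm_face_rel_composed:
  assumes t: "(xs, fs) \<in> hm_gens Ob Hm n" and j: "1 \<le> j" "j \<le> n" and kj: "k = j - 1 \<or> k = j"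
    and ab: "a \<in> carrier H" "b \<in> carrier H" and H: "H = Hm (xs ! k) (xs ! (Suc k mod Suc n))"
  shows "frag_of (hm_face cmp n j (xs, fs[k := a \<otimes>\<^bsub>H\<^esub> b]))
       - frag_of (hm_face cmp n j (xs, fs[k := a])) - frag_of (hm_face cmp n j (xs, fs[k := b]))
       \<in> zspan (hm_rels Ob Hm (n - 1))"
proof -
  note P = hm_gensD[OF t]
  obtain xs' fs' where face: "hm_face cmp n j (xs, fs) = (xs', fs')" by fastforce
  have g': "(xs', fs') \<in> hm_gens Ob Hm (n - 1)" using hm_face_gen[OF t j] face by simp
  have p: "j - 1 < Suc (n - 1)" and p': "j - 1 < n" using j by simp_all
  define G where "G = Hm (xs ! (j - 1)) (xs ! (Suc j mod Suc n))"
  have G': "G = Hm (xs' ! (j - 1)) (xs' ! (Suc (j - 1) mod Suc (n - 1)))"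
    using j hm_face_objects[OF P(1) j p', of cmp fs] hm_face_objects_next[OF P(1) j p', of cmp fs] face
    by (simp add: G_def)
  have objs: "xs ! (j - 1) \<in> Ob" "xs ! j \<in> Ob" "xs ! (Suc j mod Suc n) \<in> Ob" using P(3) j by auto
  have arrs: "fs ! (j - 1) \<in> carrier (Hm (xs ! (j - 1)) (xs ! j))"
      "fs ! j \<in> carrier (Hm (xs ! j) (xs ! (Suc j mod Suc n)))"
    using P(4)[of "j - 1"] P(4)[of j] j by auto
  let ?F = "\<lambda>v. hm_face cmp n j (xs, fs[k := v])"
  from kj show ?thesis
  proof
    assume k: "k = j - 1"
    let ?g = "cmp (xs ! (j - 1)) (xs ! j) (xs ! (Suc j mod Suc n)) (fs ! j)"
    have Hk: "H = Hm (xs ! (j - 1)) (xs ! j)" using j by (simp add: H k)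
    have gab: "?g a \<in> carrier G" "?g b \<in> carrier G"
      using ab objs arrs by (auto simp: Hk G_def intro: cmp_closed)
    have hom: "?g (a \<otimes>\<^bsub>H\<^esub> b) = ?g a \<otimes>\<^bsub>G\<^esub> ?g b"
      using ab objs arrs by (simp add: Hk G_def cmp_additive_right)
    have upd: "?F v = (xs', fs'[j - 1 := ?g v])" for v
      using hm_face_update_right_factor[OF j P(2), where cmp=cmp and xs=xs] face by (simp add: k)
    show ?thesis by (rule rel_transport[where F="?F", OF g' p G' gab hom upd])
  next
    assume k: "k = j"
    let ?g = "\<lambda>v. cmp (xs ! (j - 1)) (xs ! j) (xs ! (Suc j mod Suc n)) v (fs ! (j - 1))"
    have Hk: "H = Hm (xs ! j) (xs ! (Suc j mod Suc n))" by (simp add: H k)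
    have gab: "?g a \<in> carrier G" "?g b \<in> carrier G"
      using ab objs arrs by (auto simp: Hk G_def intro: cmp_closed)
    have hom: "?g (a \<otimes>\<^bsub>H\<^esub> b) = ?g a \<otimes>\<^bsub>G\<^esub> ?g b"
      using ab objs arrs by (simp add: Hk G_def cmp_additive_left)
    have upd: "?F v = (xs', fs'[j - 1 := ?g v])" for v
      using hm_face_update_left_factor[OF j P(2), where cmp=cmp and xs=xs] face by (simp add: k)
    show ?thesis by (rule rel_transport[where F="?F", OF g' p G' gab hom upd])
  qed
qed

lemma hm_face_rel:
  assumes t: "(xs, fs) \<in> hm_gens Ob Hm n" and j: "1 \<le> j" "j \<le> n" and k: "k < Suc n"
    and ab: "a \<in> carrier H" "b \<in> carrier H" and H: "H = Hm (xs ! k) (xs ! (Suc k mod Suc n))"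
  shows "frag_of (hm_face cmp n j (xs, fs[k := a \<otimes>\<^bsub>H\<^esub> b]))
       - frag_of (hm_face cmp n j (xs, fs[k := a])) - frag_of (hm_face cmp n j (xs, fs[k := b]))
       \<in> zspan (hm_rels Ob Hm (n - 1))"
proof (cases "k = j - 1 \<or> k = j")
  case True
  then show ?thesis using hm_face_rel_composed[OF t j _ ab H] by blast
next
  case False
  then have "k < j - 1 \<or> j < k" by linarith
  then show ?thesis using hm_face_rel_untouched[OF t j k _ ab H] by blast
qed

lemma hm_lastface_rel_composed:
  assumes t: "(xs, fs) \<in> hm_gens Ob Hm n" and n: "1 \<le> n" and k: "k = 0 \<or> k = n"
    and ab: "a \<in> carrier H" "b \<in> carrier H" and H: "H = Hm (xs ! k) (xs ! (Suc k mod Suc n))"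
  shows "frag_of (hm_lastface cmp n (xs, fs[k := a \<otimes>\<^bsub>H\<^esub> b]))
       - frag_of (hm_lastface cmp n (xs, fs[k := a])) - frag_of (hm_lastface cmp n (xs, fs[k := b]))
       \<in> zspan (hm_rels Ob Hm (n - 1))"
proof -
  note P = hm_gensD[OF t]
  obtain xs' fs' where face: "hm_lastface cmp n (xs, fs) = (xs', fs')" by fastforce
  have g': "(xs', fs') \<in> hm_gens Ob Hm (n - 1)" using hm_lastface_gen[OF t n] face by simp
  have obj: "\<And>i. i < n \<Longrightarrow> xs' ! i = xs ! Suc i"
    using hm_lastface_objects[OF P(1), of _ cmp fs] face by simp
  define G where "G = Hm (xs ! n) (xs ! 1)"
  have G': "G = Hm (xs' ! (n - 1)) (xs' ! (Suc (n - 1) mod Suc (n - 1)))"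
    using n obj[of "n - 1"] obj[of 0] by (simp add: G_def)
  have objs: "xs ! 0 \<in> Ob" "xs ! 1 \<in> Ob" "xs ! n \<in> Ob" using P(3) n by auto
  have arrs: "fs ! 0 \<in> carrier (Hm (xs ! 0) (xs ! 1))" "fs ! n \<in> carrier (Hm (xs ! n) (xs ! 0))"
    using P(4)[of 0] P(4)[of n] n by auto
  have p: "n - 1 < Suc (n - 1)" by simp
  let ?F = "\<lambda>v. hm_lastface cmp n (xs, fs[k := v])"
  from k show ?thesis
  proof
    assume k: "k = 0"
    let ?g = "\<lambda>v. cmp (xs ! n) (xs ! 0) (xs ! 1) v (fs ! n)"
    have Hk: "H = Hm (xs ! 0) (xs ! 1)" using n by (simp add: H k)
    have gab: "?g a \<in> carrier G" "?g b \<in> carrier G"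
      using ab objs arrs by (auto simp: Hk G_def intro: cmp_closed)
    have hom: "?g (a \<otimes>\<^bsub>H\<^esub> b) = ?g a \<otimes>\<^bsub>G\<^esub> ?g b"
      using ab objs arrs by (simp add: Hk G_def cmp_additive_left)
    have upd: "?F v = (xs', fs'[n - 1 := ?g v])" for v
      using hm_lastface_update_first[OF n P(2), where cmp=cmp and xs=xs] face by (simp add: k)
    show ?thesis by (rule rel_transport[where F="?F", OF g' p G' gab hom upd])
  next
    assume k: "k = n"
    let ?g = "cmp (xs ! n) (xs ! 0) (xs ! 1) (fs ! 0)"
    have Hk: "H = Hm (xs ! n) (xs ! 0)" by (simp add: H k)
    have gab: "?g a \<in> carrier G" "?g b \<in> carrier G"
      using ab objs arrs by (auto simp: Hk G_def intro: cmp_closed)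
    have hom: "?g (a \<otimes>\<^bsub>H\<^esub> b) = ?g a \<otimes>\<^bsub>G\<^esub> ?g b"
      using ab objs arrs by (simp add: Hk G_def cmp_additive_right)
    have upd: "?F v = (xs', fs'[n - 1 := ?g v])" for v
      using hm_lastface_update_last[OF n P(2), where cmp=cmp and xs=xs] face by (simp add: k)
    show ?thesis by (rule rel_transport[where F="?F", OF g' p G' gab hom upd])
  qed
qed

lemma hm_lastface_rel:
  assumes t: "(xs, fs) \<in> hm_gens Ob Hm n" and n: "1 \<le> n" and k: "k < Suc n"
    and ab: "a \<in> carrier H" "b \<in> carrier H" and H: "H = Hm (xs ! k) (xs ! (Suc k mod Suc n))"
  shows "frag_of (hm_lastface cmp n (xs, fs[k := a \<otimes>\<^bsub>H\<^esub> b]))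
       - frag_of (hm_lastface cmp n (xs, fs[k := a])) - frag_of (hm_lastface cmp n (xs, fs[k := b]))
       \<in> zspan (hm_rels Ob Hm (n - 1))"
proof (cases "k = 0 \<or> k = n")
  case True
  then show ?thesis using hm_lastface_rel_composed[OF t n _ ab H] by blast
next
  case False
  then have mid: "1 \<le> k" "k < n" using k by auto
  note P = hm_gensD[OF t]
  obtain xs' fs' where face: "hm_lastface cmp n (xs, fs) = (xs', fs')" by fastforce
  have g': "(xs', fs') \<in> hm_gens Ob Hm (n - 1)" using hm_lastface_gen[OF t n] face by simp
  have H': "H = Hm (xs' ! (k - 1)) (xs' ! (Suc (k - 1) mod Suc (n - 1)))"
    using mid hm_lastface_objects[OF P(1), of _ cmp fs] face by (simp add: H)
  have upd: "hm_lastface cmp n (xs, fs[k := v]) = (xs', fs'[k - 1 := v])" for v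
    using hm_lastface_update_middle[OF mid P(2), where cmp=cmp and xs=xs] face by simp
  have p: "k - 1 < Suc (n - 1)" using mid by simp
  show ?thesis
    by (rule rel_transport[where F="\<lambda>v. hm_lastface cmp n (xs, fs[k := v])" and g="\<lambda>v. v",
          OF g' p H' ab _ upd]) simp
qed

lemma bd_gen_rel:
  assumes n: "1 \<le> n" and r: "r \<in> hm_rels Ob Hm n"
  shows "bd cmp n r \<in> rel_span Ob Hm (n - 1)"
proof -
  obtain xs fs k a b H where t: "(xs, fs) \<in> hm_gens Ob Hm n" and k: "k < Suc n"
    and H: "H = Hm (xs ! k) (xs ! (Suc k mod Suc n))" and ab: "a \<in> carrier H" "b \<in> carrier H"
    and r: "r = frag_of (xs, fs[k := a \<otimes>\<^bsub>H\<^esub> b]) - frag_of (xs, fs[k := a]) - frag_of (xs, fs[k := b])"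
    using r unfolding hm_rels_def by blast
  let ?A = "(xs, fs[k := a \<otimes>\<^bsub>H\<^esub> b])" and ?B = "(xs, fs[k := a])" and ?C = "(xs, fs[k := b])"
  have "bd cmp n r = (\<Sum>i<n. frag_cmul ((-1) ^ i)
        (frag_of (hm_face cmp n (n - i) ?A) - frag_of (hm_face cmp n (n - i) ?B)
          - frag_of (hm_face cmp n (n - i) ?C)))
      + frag_cmul ((-1) ^ n) (frag_of (hm_lastface cmp n ?A) - frag_of (hm_lastface cmp n ?B)
          - frag_of (hm_lastface cmp n ?C))"
    unfolding r bd_def frag_extend_diff frag_extend_of hm_bd_gen_def frag_cmul_diff_right sum_subtractf
    by (simp add: algebra_simps)
  also have "\<dots> \<in> rel_span Ob Hm (n - 1)"
    unfolding rel_span_def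
    using hm_face_rel[OF t _ _ k ab H] hm_lastface_rel[OF t n k ab H]
    by (auto intro!: zspan_add zspan_sum zspan_cmul)
  finally show ?thesis .
qed

text \<open>... and hence maps rel_span into rel_span: d is well defined on the quotients.\<close>

lemma bd_rel_span: "1 \<le> n \<Longrightarrow> r \<in> rel_span Ob Hm n \<Longrightarrow> bd cmp n r \<in> rel_span Ob Hm (n - 1)"
  unfolding rel_span_def using bd_gen_rel zspan_frag_extend unfolding rel_span_def bd_def by blast

lemma rels_keys: "h \<in> hm_rels Ob Hm n \<Longrightarrow> Poly_Mapping.keys h \<subseteq> hm_gens Ob Hm n"
proof -
  assume "h \<in> hm_rels Ob Hm n"
  then obtain xs fs k a b H where t: "(xs, fs) \<in> hm_gens Ob Hm n" and k: "k < Suc n"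
    and H: "H = Hm (xs ! k) (xs ! (Suc k mod Suc n))" and ab: "a \<in> carrier H" "b \<in> carrier H"
    and h: "h = frag_of (xs, fs[k := a \<otimes>\<^bsub>H\<^esub> b]) - frag_of (xs, fs[k := a]) - frag_of (xs, fs[k := b])"
    unfolding hm_rels_def by blast
  have "comm_group H" using hm_gensD(3)[OF t] k H by (simp add: hom_group)
  then have "a \<otimes>\<^bsub>H\<^esub> b \<in> carrier H" using ab by (simp add: comm_groupE(1))
  moreover have "(xs, fs[k := v]) \<in> hm_gens Ob Hm n" if "v \<in> carrier H" for v
    using t that k H by (auto simp: hm_gens_def nth_list_update)
  ultimately show ?thesis using h ab by (auto simp: keys_frag_of dest!: subsetD[OF keys_diff])
qed

lemma generate_rels_eq_rel_span: "generate (hm_free Ob Hm n) (hm_rels Ob Hm n) = rel_span Ob Hm n"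
  unfolding hm_free_def rel_span_def by (rule generate_free_zspan) (rule rels_keys)

lemma bd_keys:
  assumes n: "1 \<le> n" and c: "Poly_Mapping.keys c \<subseteq> hm_gens Ob Hm n"
  shows "Poly_Mapping.keys (bd cmp n c) \<subseteq> hm_gens Ob Hm (n - 1)"
proof -
  have "hm_bd_gen cmp n t \<in> carrier (free_Abelian_group (hm_gens Ob Hm (n - 1)))"
    if t: "t \<in> hm_gens Ob Hm n" for t
  proof -
    obtain xs fs where tt: "t = (xs, fs)" by fastforce
    have "hm_face cmp n (n - i) t \<in> hm_gens Ob Hm (n - 1)" if "i < n" for i
      using hm_face_gen[OF t[unfolded tt], of "n - i"] that tt by simp
    then have "(\<Sum>i<n. frag_cmul ((-1) ^ i) (frag_of (hm_face cmp n (n - i) t)))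
        \<in> carrier (free_Abelian_group (hm_gens Ob Hm (n - 1)))"
      by (intro sum_closed_free_Abelian_group) (auto simp: keys_frag_of dest!: subsetD[OF keys_cmul])
    moreover have "hm_lastface cmp n t \<in> hm_gens Ob Hm (n - 1)"
      using hm_lastface_gen[OF t[unfolded tt] n] tt by simp
    ultimately show ?thesis
      unfolding hm_bd_gen_def by (auto simp: keys_frag_of dest!: subsetD[OF keys_cmul] subsetD[OF keys_add])
  qed
  then show ?thesis unfolding bd_def using c keys_frag_extend by fastforce
qed

end

section \<open>Homology via representatives\<close>

definition chain_reps :: "'o set \<Rightarrow> ('o \<Rightarrow> 'o \<Rightarrow> 'm monoid) \<Rightarrow> nat \<Rightarrow> (('o list \<times> 'm list) \<Rightarrow>\<^sub>0 int) set"
  where "chain_reps Ob Hm n = {c. Poly_Mapping.keys c \<subseteq> hm_gens Ob Hm n}"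

definition cycle_reps :: "'o set \<Rightarrow> ('o \<Rightarrow> 'o \<Rightarrow> 'm monoid) \<Rightarrow> ('o \<Rightarrow> 'o \<Rightarrow> 'o \<Rightarrow> 'm \<Rightarrow> 'm \<Rightarrow> 'm) \<Rightarrow> nat
    \<Rightarrow> (('o list \<times> 'm list) \<Rightarrow>\<^sub>0 int) set"
  where "cycle_reps Ob Hm cmp n = {c. Poly_Mapping.keys c \<subseteq> hm_gens Ob Hm n \<and>
    (n = 0 \<or> bd cmp n c \<in> rel_span Ob Hm (n - 1))}"

definition bdry_reps :: "'o set \<Rightarrow> ('o \<Rightarrow> 'o \<Rightarrow> 'm monoid) \<Rightarrow> ('o \<Rightarrow> 'o \<Rightarrow> 'o \<Rightarrow> 'm \<Rightarrow> 'm \<Rightarrow> 'm) \<Rightarrow> nat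
    \<Rightarrow> (('o list \<times> 'm list) \<Rightarrow>\<^sub>0 int) set"
  where "bdry_reps Ob Hm cmp n = {bd cmp (Suc n) e + r | e r.
    Poly_Mapping.keys e \<subseteq> hm_gens Ob Hm (Suc n) \<and> r \<in> rel_span Ob Hm n}"

definition hclass :: "'o set \<Rightarrow> ('o \<Rightarrow> 'o \<Rightarrow> 'm monoid) \<Rightarrow> ('o \<Rightarrow> 'o \<Rightarrow> 'o \<Rightarrow> 'm \<Rightarrow> 'm \<Rightarrow> 'm) \<Rightarrow> nat
    \<Rightarrow> (('o list \<times> 'm list) \<Rightarrow>\<^sub>0 int) \<Rightarrow> (('o list \<times> 'm list) \<Rightarrow>\<^sub>0 int) set set"
  where "hclass Ob Hm cmp n c = {rcos (rel_span Ob Hm n) (bd cmp (Suc n) e + c) | e.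
    Poly_Mapping.keys e \<subseteq> hm_gens Ob Hm (Suc n)}"

definition cycle_group :: "'o set \<Rightarrow> ('o \<Rightarrow> 'o \<Rightarrow> 'm monoid) \<Rightarrow> ('o \<Rightarrow> 'o \<Rightarrow> 'o \<Rightarrow> 'm \<Rightarrow> 'm \<Rightarrow> 'm) \<Rightarrow> nat
    \<Rightarrow> (('o list \<times> 'm list) \<Rightarrow>\<^sub>0 int) monoid"
  where "cycle_group Ob Hm cmp n = (hm_free Ob Hm n)\<lparr>carrier := cycle_reps Ob Hm cmp n\<rparr>"

lemma cycle_reps_0: "0 \<in> cycle_reps Ob Hm cmp n"
  by (simp add: cycle_reps_def bd_0 rel_span_0)

lemma cycle_reps_add:
  "a \<in> cycle_reps Ob Hm cmp n \<Longrightarrow> b \<in> cycle_reps Ob Hm cmp n \<Longrightarrow> a + b \<in> cycle_reps Ob Hm cmp n"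
  by (auto simp: cycle_reps_def bd_add rel_span_add dest!: subsetD[OF keys_add])

lemma cycle_reps_uminus: "a \<in> cycle_reps Ob Hm cmp n \<Longrightarrow> - a \<in> cycle_reps Ob Hm cmp n"
  by (auto simp: cycle_reps_def bd_minus rel_span_uminus)

lemma bdry_reps_0: "0 \<in> bdry_reps Ob Hm cmp n"
  unfolding bdry_reps_def by (rule CollectI, intro exI[of _ 0]) (simp add: bd_0 rel_span_0)

lemma bdry_reps_add:
  assumes "a \<in> bdry_reps Ob Hm cmp n" "b \<in> bdry_reps Ob Hm cmp n"
  shows "a + b \<in> bdry_reps Ob Hm cmp n"
proof -
  obtain e r e' r' where e: "Poly_Mapping.keys e \<subseteq> hm_gens Ob Hm (Suc n)" "r \<in> rel_span Ob Hm n"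
      "a = bd cmp (Suc n) e + r"
    and e': "Poly_Mapping.keys e' \<subseteq> hm_gens Ob Hm (Suc n)" "r' \<in> rel_span Ob Hm n"
      "b = bd cmp (Suc n) e' + r'"
    using assms by (auto simp: bdry_reps_def)
  have "a + b = bd cmp (Suc n) (e + e') + (r + r')" by (simp add: e e' bd_add algebra_simps)
  moreover have "Poly_Mapping.keys (e + e') \<subseteq> hm_gens Ob Hm (Suc n)"
    using e e' by (auto dest!: subsetD[OF keys_add])
  ultimately show ?thesis using e e' rel_span_add unfolding bdry_reps_def by blast
qed

lemma rel_span_bdry_reps: "r \<in> rel_span Ob Hm n \<Longrightarrow> r \<in> bdry_reps Ob Hm cmp n"
  unfolding bdry_reps_def by (rule CollectI, intro exI[of _ 0] exI[of _ r]) (simp add: bd_0)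

lemma bdry_reps_uminus: "a \<in> bdry_reps Ob Hm cmp n \<Longrightarrow> - a \<in> bdry_reps Ob Hm cmp n"
  unfolding bdry_reps_def
  by (force intro: exI[of _ "- e" for e] simp: bd_minus rel_span_uminus)

lemma rcos_eq_rel_span:
  "rcos (rel_span Ob Hm n) a = rcos (rel_span Ob Hm n) b \<longleftrightarrow> a - b \<in> rel_span Ob Hm n"
  unfolding rel_span_def by (rule rcos_eq)

lemma rcos_0: "rcos (rel_span Ob Hm n) 0 = rel_span Ob Hm n"
  by (simp add: rcos_def)

context lin_cat
begin

lemma chains_eq: "hm_chains Ob Hm n = hm_free Ob Hm n Mod rel_span Ob Hm n"
  by (simp add: hm_chains_def generate_rels_eq_rel_span)

lemma carrier_chains: "carrier (hm_chains Ob Hm n) = rcos (rel_span Ob Hm n) ` chain_reps Ob Hm n"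
  by (auto simp: chains_eq carrier_FactGroup hm_free_def rcos_free chain_reps_def)

lemma mult_chains: "monoid.mult (hm_chains Ob Hm n) = set_mult (hm_free Ob Hm n)"
  by (simp add: chains_eq)

lemma one_chains: "one (hm_chains Ob Hm n) = rel_span Ob Hm n"
  by (simp add: chains_eq)

lemma hm_d_rcos:
  assumes n: "1 \<le> n"
  shows "hm_d Ob Hm cmp n (rcos (rel_span Ob Hm n) c) = rcos (rel_span Ob Hm (n - 1)) (bd cmp n c)"
proof -
  have "generate (hm_free Ob Hm (n - 1)) (hm_rels Ob Hm (n - 1))
        #>\<^bsub>hm_free Ob Hm (n - 1)\<^esub> frag_extend (hm_bd_gen cmp n) c'
     = rcos (rel_span Ob Hm (n - 1)) (bd cmp n c)" if hyp: "c' \<in> rcos (rel_span Ob Hm n) c" for c'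
  proof -
    obtain r where r: "r \<in> rel_span Ob Hm n" "c' = r + c" using hyp unfolding rcos_def by blast
    have "bd cmp n c' - bd cmp n c \<in> rel_span Ob Hm (n - 1)"
      using r bd_rel_span[OF n] by (simp add: bd_add)
    then show ?thesis
      unfolding generate_rels_eq_rel_span
      by (simp add: hm_free_def rcos_free rcos_eq_rel_span flip: bd_def)
  qed
  moreover have "c \<in> rcos (rel_span Ob Hm n) c"
    unfolding rel_span_def by (rule rcos_self)
  ultimately show ?thesis unfolding hm_d_def by blast
qed

lemma cycle_reps_sub: "cycle_reps Ob Hm cmp n \<subseteq> chain_reps Ob Hm n"
  by (auto simp: cycle_reps_def chain_reps_def)

lemma hm_cycles_eq: "hm_cycles Ob Hm cmp n = rcos (rel_span Ob Hm n) ` cycle_reps Ob Hm cmp n"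
proof (cases "n = 0")
  case True
  then show ?thesis by (simp add: hm_cycles_def carrier_chains cycle_reps_def chain_reps_def)
next
  case False
  then have n: "1 \<le> n" by simp
  have "z \<in> kernel (hm_chains Ob Hm n) (hm_chains Ob Hm (n - 1)) (hm_d Ob Hm cmp n) \<longleftrightarrow>
        z \<in> rcos (rel_span Ob Hm n) ` cycle_reps Ob Hm cmp n" for z
  proof
    assume "z \<in> kernel (hm_chains Ob Hm n) (hm_chains Ob Hm (n - 1)) (hm_d Ob Hm cmp n)"
    then obtain c where c: "c \<in> chain_reps Ob Hm n" "z = rcos (rel_span Ob Hm n) c"
      and e: "hm_d Ob Hm cmp n z = rel_span Ob Hm (n - 1)"
      by (auto simp: kernel_def carrier_chains one_chains)
    then have "rcos (rel_span Ob Hm (n - 1)) (bd cmp n c) = rcos (rel_span Ob Hm (n - 1)) 0"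
      by (simp add: hm_d_rcos[OF n] rcos_0)
    then have "bd cmp n c \<in> rel_span Ob Hm (n - 1)" by (simp add: rcos_eq_rel_span)
    then show "z \<in> rcos (rel_span Ob Hm n) ` cycle_reps Ob Hm cmp n"
      using c by (auto simp: cycle_reps_def chain_reps_def)
  next
    assume "z \<in> rcos (rel_span Ob Hm n) ` cycle_reps Ob Hm cmp n"
    then obtain c where c: "c \<in> cycle_reps Ob Hm cmp n" "z = rcos (rel_span Ob Hm n) c" by auto
    then have "bd cmp n c \<in> rel_span Ob Hm (n - 1)" using False by (simp add: cycle_reps_def)
    then have "hm_d Ob Hm cmp n z = rcos (rel_span Ob Hm (n - 1)) 0"
      using c by (simp add: hm_d_rcos[OF n] rcos_eq_rel_span)
    then show "z \<in> kernel (hm_chains Ob Hm n) (hm_chains Ob Hm (n - 1)) (hm_d Ob Hm cmp n)"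
      using c cycle_reps_sub by (auto simp: kernel_def carrier_chains one_chains rcos_0)
  qed
  then show ?thesis using False by (auto simp: hm_cycles_def)
qed

lemma boundaries_eq: "hm_d Ob Hm cmp (Suc n) ` carrier (hm_chains Ob Hm (Suc n))
   = (\<lambda>e. rcos (rel_span Ob Hm n) (bd cmp (Suc n) e)) ` chain_reps Ob Hm (Suc n)"
  using hm_d_rcos[of "Suc n"] by (auto simp: carrier_chains)

lemma hclass_coset:
  "r_coset (hm_chains Ob Hm n) (hm_d Ob Hm cmp (Suc n) ` carrier (hm_chains Ob Hm (Suc n)))
     (rcos (rel_span Ob Hm n) c) = hclass Ob Hm cmp n c"
  unfolding boundaries_eq r_coset_def mult_chains hclass_def
  by (auto simp: hm_free_def rel_span_def rcos_mult chain_reps_def)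

lemma hclass_mult:
  "set_mult (hm_chains Ob Hm n) (hclass Ob Hm cmp n a) (hclass Ob Hm cmp n b) = hclass Ob Hm cmp n (a + b)"
proof -
  let ?R = "rel_span Ob Hm n"
  have "set_mult (hm_chains Ob Hm n) (hclass Ob Hm cmp n a) (hclass Ob Hm cmp n b) =
    (\<Union>X\<in>hclass Ob Hm cmp n a. \<Union>Y\<in>hclass Ob Hm cmp n b. {set_mult (free_Abelian_group (hm_gens Ob Hm n)) X Y})"
    by (simp add: set_mult_def[of "hm_chains Ob Hm n"] mult_chains hm_free_def)
  also have "\<dots> = hclass Ob Hm cmp n (a + b)"
  proof (intro equalityI subsetI)
    fix Z assume "Z \<in> (\<Union>X\<in>hclass Ob Hm cmp n a. \<Union>Y\<in>hclass Ob Hm cmp n b. {set_mult (free_Abelian_group (hm_gens Ob Hm n)) X Y})"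
    then obtain e e' where e: "Poly_Mapping.keys e \<subseteq> hm_gens Ob Hm (Suc n)" "Poly_Mapping.keys e' \<subseteq> hm_gens Ob Hm (Suc n)"
      and Z: "Z = set_mult (free_Abelian_group (hm_gens Ob Hm n)) (rcos ?R (bd cmp (Suc n) e + a)) (rcos ?R (bd cmp (Suc n) e' + b))"
      by (auto simp: hclass_def)
    have "Z = rcos ?R (bd cmp (Suc n) (e + e') + (a + b))"
      unfolding Z rel_span_def rcos_mult by (simp add: bd_add algebra_simps)
    moreover have "Poly_Mapping.keys (e + e') \<subseteq> hm_gens Ob Hm (Suc n)"
      using e by (auto dest!: subsetD[OF keys_add])
    ultimately show "Z \<in> hclass Ob Hm cmp n (a + b)" by (auto simp: hclass_def)
  next
    fix Z assume "Z \<in> hclass Ob Hm cmp n (a + b)"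
    then obtain e where e: "Poly_Mapping.keys e \<subseteq> hm_gens Ob Hm (Suc n)"
      and Z: "Z = rcos ?R (bd cmp (Suc n) e + (a + b))" by (auto simp: hclass_def)
    have "Z = set_mult (free_Abelian_group (hm_gens Ob Hm n)) (rcos ?R (bd cmp (Suc n) e + a)) (rcos ?R (bd cmp (Suc n) 0 + b))"
      unfolding Z rel_span_def rcos_mult by (simp add: bd_0 algebra_simps)
    moreover have "rcos ?R (bd cmp (Suc n) e + a) \<in> hclass Ob Hm cmp n a" using e by (auto simp: hclass_def)
    moreover have "rcos ?R (bd cmp (Suc n) 0 + b) \<in> hclass Ob Hm cmp n b" by (auto simp: hclass_def)
    ultimately show "Z \<in> (\<Union>X\<in>hclass Ob Hm cmp n a. \<Union>Y\<in>hclass Ob Hm cmp n b. {set_mult (free_Abelian_group (hm_gens Ob Hm n)) X Y})"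
      by blast
  qed
  finally show ?thesis .
qed

lemma hclass_subset:
  assumes "a - b \<in> bdry_reps Ob Hm cmp n"
  shows "hclass Ob Hm cmp n a \<subseteq> hclass Ob Hm cmp n b"
proof
  fix X assume "X \<in> hclass Ob Hm cmp n a"
  then obtain e where e: "Poly_Mapping.keys e \<subseteq> hm_gens Ob Hm (Suc n)"
    and X: "X = rcos (rel_span Ob Hm n) (bd cmp (Suc n) e + a)"
    unfolding hclass_def by blast
  obtain e0 r0 where e0: "Poly_Mapping.keys e0 \<subseteq> hm_gens Ob Hm (Suc n)" and r0: "r0 \<in> rel_span Ob Hm n"
    and ab: "a - b = bd cmp (Suc n) e0 + r0"
    using assms by (auto simp: bdry_reps_def)
  have "(bd cmp (Suc n) e + a) - (bd cmp (Suc n) (e + e0) + b) = r0"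
    using ab by (simp add: bd_add algebra_simps)
  then have "X = rcos (rel_span Ob Hm n) (bd cmp (Suc n) (e + e0) + b)"
    using X r0 by (simp add: rcos_eq_rel_span)
  moreover have "Poly_Mapping.keys (e + e0) \<subseteq> hm_gens Ob Hm (Suc n)"
    using e e0 by (auto dest!: subsetD[OF keys_add])
  ultimately show "X \<in> hclass Ob Hm cmp n b" by (auto simp: hclass_def)
qed

lemma hclass_eq: "hclass Ob Hm cmp n a = hclass Ob Hm cmp n b \<longleftrightarrow> a - b \<in> bdry_reps Ob Hm cmp n"
proof
  let ?R = "rel_span Ob Hm n"
  assume q: "hclass Ob Hm cmp n a = hclass Ob Hm cmp n b"
  have "rcos ?R (bd cmp (Suc n) 0 + a) \<in> hclass Ob Hm cmp n a" unfolding hclass_def by auto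
  then have "rcos ?R a \<in> hclass Ob Hm cmp n b" using q by (simp add: bd_0)
  then obtain e where e: "Poly_Mapping.keys e \<subseteq> hm_gens Ob Hm (Suc n)"
    and "rcos ?R a = rcos ?R (bd cmp (Suc n) e + b)" unfolding hclass_def by blast
  then have "a - (bd cmp (Suc n) e + b) \<in> ?R" by (simp add: rcos_eq_rel_span)
  moreover have "a - b = bd cmp (Suc n) e + (a - (bd cmp (Suc n) e + b))" by simp
  ultimately show "a - b \<in> bdry_reps Ob Hm cmp n" using e unfolding bdry_reps_def by blast
next
  assume ab: "a - b \<in> bdry_reps Ob Hm cmp n"
  then have "b - a \<in> bdry_reps Ob Hm cmp n" using bdry_reps_uminus[OF ab] by simp
  then show "hclass Ob Hm cmp n a = hclass Ob Hm cmp n b"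
    using hclass_subset ab by blast
qed

lemma HH_carrier: "carrier (HH Ob Hm cmp n) = hclass Ob Hm cmp n ` cycle_reps Ob Hm cmp n"
  unfolding HH_def by (auto simp: FactGroup_def RCOSETS_def hm_cycles_eq hclass_coset[symmetric] r_coset_def)

lemma HH_mult: "hclass Ob Hm cmp n a \<otimes>\<^bsub>HH Ob Hm cmp n\<^esub> hclass Ob Hm cmp n b = hclass Ob Hm cmp n (a + b)"
  unfolding HH_def by (simp add: FactGroup_def set_mult_def[of "hm_chains Ob Hm n\<lparr>carrier := hm_cycles Ob Hm cmp n\<rparr>"]
     flip: hclass_mult)

lemma HH_one: "\<one>\<^bsub>HH Ob Hm cmp n\<^esub> = hclass Ob Hm cmp n 0"
proof -
  have "\<one>\<^bsub>HH Ob Hm cmp n\<^esub> = hm_d Ob Hm cmp (Suc n) ` carrier (hm_chains Ob Hm (Suc n))"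
    unfolding HH_def by (simp add: FactGroup_def)
  also have "\<dots> = hclass Ob Hm cmp n 0" unfolding boundaries_eq hclass_def chain_reps_def by auto
  finally show ?thesis .
qed

lemma comm_group_HH: "comm_group (HH Ob Hm cmp n)"
  by (rule comm_group_from_frags[where Z="cycle_reps Ob Hm cmp n" and q="hclass Ob Hm cmp n"])
     (auto simp: cycle_reps_0 cycle_reps_add cycle_reps_uminus HH_carrier HH_mult HH_one)

lemma group_HH: "group (HH Ob Hm cmp n)"
  using comm_group_HH by (simp add: comm_group_def)

lemma subgroup_cycle_reps: "subgroup (cycle_reps Ob Hm cmp n) (hm_free Ob Hm n)"
proof -
  have "group (hm_free Ob Hm n)" by (simp add: hm_free_def)
  then show ?thesis
  proof (rule group.subgroupI)
    show "cycle_reps Ob Hm cmp n \<subseteq> carrier (hm_free Ob Hm n)" by (auto simp: hm_free_def cycle_reps_def)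
    show "cycle_reps Ob Hm cmp n \<noteq> {}" using cycle_reps_0 by blast
    fix a b assume a: "a \<in> cycle_reps Ob Hm cmp n" and b: "b \<in> cycle_reps Ob Hm cmp n"
    have ka: "Poly_Mapping.keys a \<subseteq> hm_gens Ob Hm n" using a by (simp add: cycle_reps_def)
    show "inv\<^bsub>hm_free Ob Hm n\<^esub> a \<in> cycle_reps Ob Hm cmp n" using a ka by (simp add: hm_free_def cycle_reps_uminus)
    show "a \<otimes>\<^bsub>hm_free Ob Hm n\<^esub> b \<in> cycle_reps Ob Hm cmp n" using a b by (simp add: hm_free_def cycle_reps_add)
  qed
qed

lemma group_cycle_group: "group (cycle_group Ob Hm cmp n)"
  unfolding cycle_group_def by (rule group.subgroup_imp_group[OF _ subgroup_cycle_reps]) (simp add: hm_free_def)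

lemma hclass_hom: "hclass Ob Hm cmp n \<in> hom (cycle_group Ob Hm cmp n) (HH Ob Hm cmp n)"
  by (rule homI) (auto simp: cycle_group_def HH_carrier HH_mult hm_free_def)

lemma hclass_surj: "hclass Ob Hm cmp n ` carrier (cycle_group Ob Hm cmp n) = carrier (HH Ob Hm cmp n)"
  by (simp add: cycle_group_def HH_carrier)

lemma hclass_kernel:
  "kernel (cycle_group Ob Hm cmp n) (HH Ob Hm cmp n) (hclass Ob Hm cmp n)
     = cycle_reps Ob Hm cmp n \<inter> bdry_reps Ob Hm cmp n"
  by (auto simp: kernel_def cycle_group_def HH_one hclass_eq)

end

text \<open>The endomorphism ring C(x,x) is the full subcategory on {x}; everything about it is
  obtained from the general theory by restricting the object set.\<close>

lemma linear_category_subset: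
  assumes "linear_category Ob Hm cmp idm" and "T \<subseteq> Ob"
  shows "linear_category T Hm cmp idm"
  using assms unfolding linear_category_def by (meson subsetD)

lemma (in lin_cat) lin_cat_single: "x \<in> Ob \<Longrightarrow> lin_cat {x} Hm cmp idm"
  unfolding lin_cat_def by (rule linear_category_subset[OF LC]) simp

lemma hm_gens_mono: "T \<subseteq> Ob \<Longrightarrow> hm_gens T Hm n \<subseteq> hm_gens Ob Hm n"
  by (auto simp: hm_gens_def)

lemma hm_rels_mono: "T \<subseteq> Ob \<Longrightarrow> hm_rels T Hm n \<subseteq> hm_rels Ob Hm n"
  unfolding hm_rels_def using hm_gens_mono by blast

lemma rel_span_mono: "T \<subseteq> Ob \<Longrightarrow> r \<in> rel_span T Hm n \<Longrightarrow> r \<in> rel_span Ob Hm n"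
  unfolding rel_span_def by (erule zspan_mono[OF _ hm_rels_mono])

lemma hm_gens_single_objects: "t \<in> hm_gens {x} Hm n \<Longrightarrow> set (fst t) = {x}"
  by (cases t; cases "fst t") (auto simp: hm_gens_def)

lemma hm_gens_single_iff:
  "x \<in> Ob \<Longrightarrow> t \<in> hm_gens {x} Hm n \<longleftrightarrow> t \<in> hm_gens Ob Hm n \<and> set (fst t) = {x}"
  using hm_gens_single_objects[of t x Hm n] by (auto simp: hm_gens_def)

definition diag_part :: "'o \<Rightarrow> (('o list \<times> 'm list) \<Rightarrow>\<^sub>0 int) \<Rightarrow> (('o list \<times> 'm list) \<Rightarrow>\<^sub>0 int)"
  where "diag_part x = frag_extend (\<lambda>t. if set (fst t) = {x} then frag_of t else 0)"

lemma diag_part_add: "diag_part x (a + b) = diag_part x a + diag_part x b"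
  by (simp add: diag_part_def frag_extend_add)

lemma diag_part_diff: "diag_part x (a - b) = diag_part x a - diag_part x b"
  by (simp add: diag_part_def frag_extend_diff)

lemma diag_part_0: "diag_part x 0 = 0"
  by (simp add: diag_part_def)

lemma diag_part_sum: "finite I \<Longrightarrow> diag_part x (sum f I) = (\<Sum>i\<in>I. diag_part x (f i))"
  by (simp add: diag_part_def frag_extend_sum o_def)

lemma diag_part_outside: "x \<notin> (\<Union>t\<in>Poly_Mapping.keys c. set (fst t)) \<Longrightarrow> diag_part x c = 0"
  unfolding diag_part_def by (rule frag_extend_eq_0) auto

lemma diag_part_keys:
  assumes "Poly_Mapping.keys c \<subseteq> hm_gens Ob Hm n" and "x \<in> Ob"
  shows "Poly_Mapping.keys (diag_part x c) \<subseteq> hm_gens {x} Hm n"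
proof -
  have "Poly_Mapping.keys (if set (fst t) = {x} then frag_of t else 0) \<subseteq> hm_gens {x} Hm n"
    if "t \<in> Poly_Mapping.keys c" for t
    using assms that hm_gens_single_iff[of x Ob t Hm n] by (auto simp: keys_frag_of)
  then show ?thesis unfolding diag_part_def by (rule order_trans[OF keys_frag_extend UN_least])
qed

lemma diag_part_single:
  assumes c: "Poly_Mapping.keys c \<subseteq> hm_gens {x} Hm n"
  shows "diag_part y c = (if y = x then c else 0)"
proof -
  have objs: "set (fst t) = {x}" if "t \<in> Poly_Mapping.keys c" for t
    using hm_gens_single_objects[OF subsetD[OF c that]] .
  show ?thesis
  proof (cases "y = x")
    case True
    have "diag_part y c = frag_extend frag_of c"
      unfolding diag_part_def by (rule frag_extend_eq) (simp add: objs True)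
    also have "\<dots> = c" by (rule frag_expansion[symmetric])
    finally show ?thesis using True by simp
  next
    case False
    have "diag_part y c = 0"
      unfolding diag_part_def by (rule frag_extend_eq_0) (use objs False in auto)
    then show ?thesis using False by simp
  qed
qed

lemma bdry_reps_mono:
  assumes T: "T \<subseteq> Ob" and c: "c \<in> bdry_reps T Hm cmp n"
  shows "c \<in> bdry_reps Ob Hm cmp n"
proof -
  obtain e r where "Poly_Mapping.keys e \<subseteq> hm_gens T Hm (Suc n)" "r \<in> rel_span T Hm n"
    "c = bd cmp (Suc n) e + r"
    using c by (auto simp: bdry_reps_def)
  then show ?thesis
    using hm_gens_mono[OF T, of Hm "Suc n"] rel_span_mono[OF T] unfolding bdry_reps_def by blast
qed

lemma cycle_reps_mono:
  assumes T: "T \<subseteq> Ob" and c: "c \<in> cycle_reps T Hm cmp n"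
  shows "c \<in> cycle_reps Ob Hm cmp n"
  using c hm_gens_mono[OF T, of Hm n] rel_span_mono[OF T] by (auto simp: cycle_reps_def)

lemma diag_part_sum_single:
  assumes "finite Sp" and "\<And>x. x \<in> Sp \<Longrightarrow> Poly_Mapping.keys (C x) \<subseteq> hm_gens {x} Hm n"
  shows "diag_part y (\<Sum>x\<in>Sp. C x) = (if y \<in> Sp then C y else 0)"
proof -
  have "diag_part y (\<Sum>x\<in>Sp. C x) = (\<Sum>x\<in>Sp. if x = y then C y else 0)"
    unfolding diag_part_sum[OF assms(1)] by (rule sum.cong) (auto simp: diag_part_single[OF assms(2)])
  also have "\<dots> = (if y \<in> Sp then C y else 0)" using assms(1) by simp
  finally show ?thesis .
qed

section \<open>Upper-triangular categories\<close>

lemma cyclic_chain_constant: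
  assumes po: "partial_order_on A r" and L: "length xs = Suc n" and X: "set xs \<subseteq> A"
    and step: "\<And>k. k < Suc n \<Longrightarrow> (xs ! k, xs ! (Suc k mod Suc n)) \<in> r"
  shows "set xs = {xs ! 0}"
proof -
  have refl: "refl_on A r" and tr: "trans r" and an: "antisym r"
    using po by (auto simp: partial_order_on_def preorder_on_def)
  have XA: "\<And>i. i < Suc n \<Longrightarrow> xs ! i \<in> A" using X L by (metis nth_mem subsetD)
  have le: "(xs ! i, xs ! j) \<in> r" if "i \<le> j" "j < Suc n" for i j
    using that
  proof (induction j)
    case 0
    then show ?case using refl XA by (auto simp: refl_on_def)
  next
    case (Suc j)
    show ?case
    proof (cases "i = Suc j")
      case True
      then show ?thesis using refl XA Suc by (auto simp: refl_on_def)
    next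
      case False
      then have "(xs ! i, xs ! j) \<in> r" using Suc by auto
      moreover have "(xs ! j, xs ! Suc j) \<in> r" using step[of j] Suc by simp
      ultimately show ?thesis using tr by (meson transD)
    qed
  qed
  have "xs ! k = xs ! 0" if k: "k < Suc n" for k
  proof -
    have "(xs ! 0, xs ! k) \<in> r" using le[of 0 k] k by simp
    moreover have "(xs ! k, xs ! n) \<in> r" using le[of k n] k by simp
    moreover have "(xs ! n, xs ! 0) \<in> r" using step[of n] by simp
    ultimately show ?thesis using tr an by (meson antisymD transD)
  qed
  then have "\<And>y. y \<in> set xs \<Longrightarrow> y = xs ! 0" using L by (metis in_set_conv_nth)
  moreover have "xs ! 0 \<in> set xs" using L by simp
  ultimately show ?thesis by blast
qed

text \<open>An elementary tensor with a zero factor vanishes modulo the relations: it is minus the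
  relation expressing additivity in that factor at 0 = 0 + 0.\<close>

lemma (in lin_cat) zero_factor_in_rel_span:
  assumes t: "(xs, fs) \<in> hm_gens Ob Hm n" and k: "k < Suc n"
    and H: "H = Hm (xs ! k) (xs ! (Suc k mod Suc n))" and zero: "fs ! k = \<one>\<^bsub>H\<^esub>"
  shows "frag_of (xs, fs) \<in> rel_span Ob Hm n"
proof -
  have G: "comm_group H" using hom_group hm_gensD(3)[OF t] k H by simp
  then have one: "\<one>\<^bsub>H\<^esub> \<in> carrier H" "\<one>\<^bsub>H\<^esub> \<otimes>\<^bsub>H\<^esub> \<one>\<^bsub>H\<^esub> = \<one>\<^bsub>H\<^esub>"
    by (simp_all add: comm_groupE(2) comm_groupE(5))
  have fs: "fs[k := \<one>\<^bsub>H\<^esub>] = fs" using zero by (metis list_update_id)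
  have "frag_of (xs, fs[k := \<one>\<^bsub>H\<^esub> \<otimes>\<^bsub>H\<^esub> \<one>\<^bsub>H\<^esub>]) - frag_of (xs, fs[k := \<one>\<^bsub>H\<^esub>])
      - frag_of (xs, fs[k := \<one>\<^bsub>H\<^esub>]) \<in> hm_rels Ob Hm n"
    unfolding hm_rels_def using t k H one(1) by blast
  then have "- frag_of (xs, fs) \<in> rel_span Ob Hm n"
    using one(2) fs by (simp add: rel_span_def zspan.gen)
  then show ?thesis using rel_span_uminus by fastforce
qed

locale upper_tri_cat = lin_cat +
  assumes UT: "upper_triangular Ob Hm"
begin

text \<open>The key consequence of upper-triangularity: a generator whose objects are not all equal
  passes through a zero Hom group, so it vanishes modulo the relations.\<close>

lemma nondiag_gen_in_rel_span:
  assumes t: "t \<in> hm_gens Ob Hm n" and nd: "\<And>x. set (fst t) \<noteq> {x}"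
  shows "frag_of t \<in> rel_span Ob Hm n"
proof -
  obtain xs fs where tt: "t = (xs, fs)" by fastforce
  note P = hm_gensD[OF t[unfolded tt]]
  obtain r where po: "partial_order_on Ob r"
    and r: "\<And>x y. x \<in> Ob \<Longrightarrow> y \<in> Ob \<Longrightarrow> carrier (Hm x y) \<noteq> {\<one>\<^bsub>Hm x y\<^esub>} \<Longrightarrow> (x, y) \<in> r"
    using UT unfolding upper_triangular_def by blast
  have X: "set xs \<subseteq> Ob" using t tt by (auto simp: hm_gens_def)
  have "\<exists>k<Suc n. (xs ! k, xs ! (Suc k mod Suc n)) \<notin> r"
  proof (rule ccontr)
    assume "\<not> (\<exists>k<Suc n. (xs ! k, xs ! (Suc k mod Suc n)) \<notin> r)"
    then have "set xs = {xs ! 0}" using cyclic_chain_constant[OF po P(1) X] by blast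
    then show False using nd[of "xs ! 0"] tt by simp
  qed
  then obtain k where k: "k < Suc n" and kr: "(xs ! k, xs ! (Suc k mod Suc n)) \<notin> r" by blast
  define H where "H = Hm (xs ! k) (xs ! (Suc k mod Suc n))"
  have "carrier H = {\<one>\<^bsub>H\<^esub>}" using r[of "xs ! k" "xs ! (Suc k mod Suc n)"] kr P(3) k by (auto simp: H_def)
  then have "fs ! k = \<one>\<^bsub>H\<^esub>" using P(4)[OF k] by (auto simp: H_def)
  then show ?thesis using zero_factor_in_rel_span[OF t[unfolded tt] k H_def] tt by simp
qed

lemma chain_eq_sum_diag_parts:
  assumes c: "Poly_Mapping.keys c \<subseteq> hm_gens Ob Hm n" and X: "finite X"
    and cX: "\<And>t. t \<in> Poly_Mapping.keys c \<Longrightarrow> set (fst t) \<subseteq> X"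
  shows "c - (\<Sum>x\<in>X. diag_part x c) \<in> rel_span Ob Hm n"
proof -
  have "Poly_Mapping.keys c \<subseteq> {t \<in> hm_gens Ob Hm n. set (fst t) \<subseteq> X}" using c cX by auto
  then show ?thesis
  proof (induction c rule: frag_induction)
    case zero
    then show ?case by (simp add: diag_part_0 rel_span_0)
  next
    case (diff a b)
    have eq: "a - b - (\<Sum>x\<in>X. diag_part x (a - b))
        = (a - (\<Sum>x\<in>X. diag_part x a)) - (b - (\<Sum>x\<in>X. diag_part x b))"
      by (simp add: diag_part_diff sum_subtractf)
    show ?case unfolding eq by (rule rel_span_diff[OF diff(1) diff(2)])
  next
    case (one t)
    show ?case
    proof (cases "\<exists>x. set (fst t) = {x}")
      case True
      then obtain x where x: "set (fst t) = {x}" by blast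
      then have "x \<in> X" using one by auto
      moreover have "(\<Sum>y\<in>X. diag_part y (frag_of t)) = (\<Sum>y\<in>X. if y = x then frag_of t else 0)"
        by (rule sum.cong) (auto simp: diag_part_def x)
      ultimately show ?thesis using X by (simp add: rel_span_0)
    next
      case False
      then have "(\<Sum>y\<in>X. diag_part y (frag_of t)) = 0" by (simp add: diag_part_def)
      then show ?thesis using nondiag_gen_in_rel_span[of t n] False one by simp
    qed
  qed
qed

lemma diag_part_rel_span:
  assumes x: "x \<in> Ob" and r: "r \<in> rel_span Ob Hm n"
  shows "diag_part x r \<in> rel_span {x} Hm n"
proof -
  have "diag_part x h \<in> zspan (hm_rels {x} Hm n)" if h: "h \<in> hm_rels Ob Hm n" for h
  proof -
    obtain xs fs k a b H where t: "(xs, fs) \<in> hm_gens Ob Hm n" and k: "k < Suc n"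
      and H: "H = Hm (xs ! k) (xs ! (Suc k mod Suc n))" and ab: "a \<in> carrier H" "b \<in> carrier H"
      and h: "h = frag_of (xs, fs[k := a \<otimes>\<^bsub>H\<^esub> b]) - frag_of (xs, fs[k := a]) - frag_of (xs, fs[k := b])"
      using h unfolding hm_rels_def by blast
    show ?thesis
    proof (cases "set xs = {x}")
      case True
      have "(xs, fs) \<in> hm_gens {x} Hm n" using t True hm_gens_single_iff[OF x, of "(xs, fs)" Hm n] by simp
      then have "h \<in> hm_rels {x} Hm n" unfolding hm_rels_def using k H ab h by blast
      then show ?thesis using True h by (simp add: diag_part_def frag_extend_diff zspan.gen)
    next
      case False
      then show ?thesis using h by (simp add: diag_part_def frag_extend_diff zspan.zero)
    qed
  qed
  then show ?thesis
    using r unfolding rel_span_def diag_part_def by (blast intro: zspan_frag_extend)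
qed

lemma diag_part_bd:
  assumes n: "1 \<le> n" and c: "Poly_Mapping.keys c \<subseteq> hm_gens Ob Hm n" and x: "x \<in> Ob"
  shows "bd cmp n (diag_part x c) - diag_part x (bd cmp n c) \<in> rel_span {x} Hm (n - 1)"
  using c
proof (induction c rule: frag_induction)
  case zero
  then show ?case by (simp add: diag_part_0 bd_0 rel_span_0)
next
  case (diff a b)
  have eq: "bd cmp n (diag_part x (a - b)) - diag_part x (bd cmp n (a - b))
     = (bd cmp n (diag_part x a) - diag_part x (bd cmp n a))
       - (bd cmp n (diag_part x b) - diag_part x (bd cmp n b))"
    by (simp add: diag_part_diff bd_diff)
  show ?case unfolding eq by (rule rel_span_diff[OF diff(1) diff(2)])
next
  case (one t)
  show ?case
  proof (cases "\<exists>y. set (fst t) = {y}")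
    case True
    then obtain y where y: "set (fst t) = {y}" by blast
    have yOb: "y \<in> Ob" using one y by (auto simp: hm_gens_def)
    have ty: "Poly_Mapping.keys (frag_of t) \<subseteq> hm_gens {y} Hm n"
      using one y hm_gens_single_iff[OF yOb, of t Hm n] by (simp add: keys_frag_of)
    have kb: "Poly_Mapping.keys (bd cmp n (frag_of t)) \<subseteq> hm_gens {y} Hm (n - 1)"
      using lin_cat.bd_keys[OF lin_cat_single[OF yOb] n ty] .
    show ?thesis
      using diag_part_single[OF ty, of x] diag_part_single[OF kb, of x] by (simp add: bd_0 rel_span_0)
  next
    case False
    then have "diag_part x (frag_of t) = 0" by (auto simp: diag_part_def)
    moreover have "bd cmp n (frag_of t) \<in> rel_span Ob Hm (n - 1)"
      using bd_rel_span[OF n nondiag_gen_in_rel_span[OF one]] False by blast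
    then have "diag_part x (bd cmp n (frag_of t)) \<in> rel_span {x} Hm (n - 1)"
      by (rule diag_part_rel_span[OF x])
    ultimately show ?thesis by (simp add: bd_0 rel_span_uminus)
  qed
qed

lemma diag_part_cycle:
  assumes c: "c \<in> cycle_reps Ob Hm cmp n" and x: "x \<in> Ob"
  shows "diag_part x c \<in> cycle_reps {x} Hm cmp n"
proof -
  have k: "Poly_Mapping.keys c \<subseteq> hm_gens Ob Hm n" using c by (simp add: cycle_reps_def)
  have "bd cmp n (diag_part x c) \<in> rel_span {x} Hm (n - 1)" if n: "n \<noteq> 0"
  proof -
    have "bd cmp n c \<in> rel_span Ob Hm (n - 1)" using c n by (simp add: cycle_reps_def)
    then have "diag_part x (bd cmp n c) \<in> rel_span {x} Hm (n - 1)" by (rule diag_part_rel_span[OF x])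
    moreover have "bd cmp n (diag_part x c) - diag_part x (bd cmp n c) \<in> rel_span {x} Hm (n - 1)"
      using diag_part_bd[OF _ k x] n by simp
    ultimately show ?thesis using rel_span_add by fastforce
  qed
  then show ?thesis using diag_part_keys[OF k x] by (auto simp: cycle_reps_def)
qed

lemma diag_part_bdry:
  assumes c: "c \<in> bdry_reps Ob Hm cmp n" and x: "x \<in> Ob"
  shows "diag_part x c \<in> bdry_reps {x} Hm cmp n"
proof -
  obtain e r where e: "Poly_Mapping.keys e \<subseteq> hm_gens Ob Hm (Suc n)" and r: "r \<in> rel_span Ob Hm n"
    and ce: "c = bd cmp (Suc n) e + r" using c by (auto simp: bdry_reps_def)
  define d where "d = bd cmp (Suc n) (diag_part x e) - diag_part x (bd cmp (Suc n) e)"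
  have d: "d \<in> rel_span {x} Hm n" using diag_part_bd[of "Suc n" e x] e x by (simp add: d_def)
  have "diag_part x c = bd cmp (Suc n) (diag_part x e) + (diag_part x r - d)"
    by (simp add: ce diag_part_add d_def)
  moreover have "diag_part x r - d \<in> rel_span {x} Hm n"
    using diag_part_rel_span[OF x r] d rel_span_diff by blast
  moreover have "Poly_Mapping.keys (diag_part x e) \<subseteq> hm_gens {x} Hm (Suc n)"
    using diag_part_keys[OF e x] .
  ultimately show ?thesis unfolding bdry_reps_def by blast
qed

end

section \<open>The comparison map to the direct sum\<close>

definition diag_map :: "'o set \<Rightarrow> ('o \<Rightarrow> 'o \<Rightarrow> 'm monoid) \<Rightarrow> ('o \<Rightarrow> 'o \<Rightarrow> 'o \<Rightarrow> 'm \<Rightarrow> 'm \<Rightarrow> 'm) \<Rightarrow> nat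
    \<Rightarrow> (('o list \<times> 'm list) \<Rightarrow>\<^sub>0 int) \<Rightarrow> 'o \<Rightarrow> (('o list \<times> 'm list) \<Rightarrow>\<^sub>0 int) set set"
  where "diag_map Ob Hm cmp n c = (\<lambda>x\<in>Ob. hclass {x} Hm cmp n (diag_part x c))"

lemma restrict_ext_iff: "((\<lambda>x\<in>A. f x) = (\<lambda>x\<in>A. g x)) \<longleftrightarrow> (\<forall>x\<in>A. f x = g x)"
  by (metis restrict_apply' restrict_ext)

context upper_tri_cat
begin

abbreviation HH_sum where "HH_sum n \<equiv> sum_group Ob (\<lambda>x. HH {x} Hm cmp n)"

lemma group_HH_sum: "group (HH_sum n)"
  by (rule sum_group) (simp add: lin_cat.group_HH[OF lin_cat_single])

lemma carrier_HH_sum: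
  "carrier (HH_sum n) = {u \<in> (\<Pi>\<^sub>E x\<in>Ob. carrier (HH {x} Hm cmp n)).
     finite {x \<in> Ob. u x \<noteq> \<one>\<^bsub>HH {x} Hm cmp n\<^esub>}}"
  by (rule carrier_sum_group) (simp add: lin_cat.group_HH[OF lin_cat_single])

lemma diag_map_carrier:
  assumes c: "c \<in> cycle_reps Ob Hm cmp n"
  shows "diag_map Ob Hm cmp n c \<in> carrier (HH_sum n)"
proof -
  have "{x \<in> Ob. diag_map Ob Hm cmp n c x \<noteq> \<one>\<^bsub>HH {x} Hm cmp n\<^esub>} \<subseteq> (\<Union>t\<in>Poly_Mapping.keys c. set (fst t))"
    using diag_part_outside lin_cat.HH_one[OF lin_cat_single] by (fastforce simp: diag_map_def)
  then have "finite {x \<in> Ob. diag_map Ob Hm cmp n c x \<noteq> \<one>\<^bsub>HH {x} Hm cmp n\<^esub>}"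
    by (rule finite_subset) simp
  moreover have "diag_map Ob Hm cmp n c \<in> (\<Pi>\<^sub>E x\<in>Ob. carrier (HH {x} Hm cmp n))"
    using diag_part_cycle[OF c] lin_cat.HH_carrier[OF lin_cat_single] by (simp add: diag_map_def)
  ultimately show ?thesis by (simp add: carrier_HH_sum)
qed

lemma diag_map_hom: "diag_map Ob Hm cmp n \<in> hom (cycle_group Ob Hm cmp n) (HH_sum n)"
proof (rule homI)
  fix c assume "c \<in> carrier (cycle_group Ob Hm cmp n)"
  then show "diag_map Ob Hm cmp n c \<in> carrier (HH_sum n)" by (simp add: cycle_group_def diag_map_carrier)
next
  fix a b assume "a \<in> carrier (cycle_group Ob Hm cmp n)" "b \<in> carrier (cycle_group Ob Hm cmp n)"
  have "a \<otimes>\<^bsub>cycle_group Ob Hm cmp n\<^esub> b = a + b" by (simp add: cycle_group_def hm_free_def)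
  moreover have "diag_map Ob Hm cmp n (a + b) x
      = (diag_map Ob Hm cmp n a \<otimes>\<^bsub>HH_sum n\<^esub> diag_map Ob Hm cmp n b) x" for x
    using lin_cat.HH_mult[OF lin_cat_single] by (simp add: diag_map_def diag_part_add)
  ultimately show "diag_map Ob Hm cmp n (a \<otimes>\<^bsub>cycle_group Ob Hm cmp n\<^esub> b)
      = diag_map Ob Hm cmp n a \<otimes>\<^bsub>HH_sum n\<^esub> diag_map Ob Hm cmp n b"
    by auto
qed

text \<open>A chain whose diagonal parts are all boundaries is a boundary: it differs from the sum
  of its diagonal parts by relations.\<close>

lemma bdry_from_diag_parts:
  assumes c: "Poly_Mapping.keys c \<subseteq> hm_gens Ob Hm n"
    and diag: "\<And>x. x \<in> Ob \<Longrightarrow> diag_part x c \<in> bdry_reps {x} Hm cmp n"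
  shows "c \<in> bdry_reps Ob Hm cmp n"
proof -
  define X where "X = (\<Union>t\<in>Poly_Mapping.keys c. set (fst t))"
  have X: "finite X" "X \<subseteq> Ob" using c by (force simp: X_def hm_gens_def)+
  have "c - (\<Sum>x\<in>X. diag_part x c) \<in> bdry_reps Ob Hm cmp n"
    using chain_eq_sum_diag_parts[OF c X(1)] by (auto simp: X_def intro: rel_span_bdry_reps)
  moreover have "(\<Sum>x\<in>X. diag_part x c) \<in> bdry_reps Ob Hm cmp n"
  proof (rule sum_mem_closed)
    fix x assume "x \<in> X"
    then show "diag_part x c \<in> bdry_reps Ob Hm cmp n"
      using X diag bdry_reps_mono[of "{x}" Ob] by blast
  qed (simp_all add: bdry_reps_0 bdry_reps_add)
  ultimately have "(c - (\<Sum>x\<in>X. diag_part x c)) + (\<Sum>x\<in>X. diag_part x c) \<in> bdry_reps Ob Hm cmp n"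
    by (rule bdry_reps_add)
  then show ?thesis by simp
qed

lemma diag_map_eq_one_iff:
  "diag_map Ob Hm cmp n c = \<one>\<^bsub>HH_sum n\<^esub> \<longleftrightarrow> (\<forall>x\<in>Ob. diag_part x c \<in> bdry_reps {x} Hm cmp n)"
proof -
  have "diag_map Ob Hm cmp n c = \<one>\<^bsub>HH_sum n\<^esub>
      \<longleftrightarrow> (\<forall>x\<in>Ob. hclass {x} Hm cmp n (diag_part x c) = \<one>\<^bsub>HH {x} Hm cmp n\<^esub>)"
    unfolding diag_map_def one_sum_group by (rule restrict_ext_iff)
  also have "\<dots> \<longleftrightarrow> (\<forall>x\<in>Ob. diag_part x c \<in> bdry_reps {x} Hm cmp n)"
    using lin_cat.HH_one[OF lin_cat_single] lin_cat.hclass_eq[OF lin_cat_single] by simp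
  finally show ?thesis .
qed

lemma diag_map_kernel:
  "kernel (cycle_group Ob Hm cmp n) (HH_sum n) (diag_map Ob Hm cmp n)
     = cycle_reps Ob Hm cmp n \<inter> bdry_reps Ob Hm cmp n"
proof -
  have "c \<in> bdry_reps Ob Hm cmp n \<longleftrightarrow> (\<forall>x\<in>Ob. diag_part x c \<in> bdry_reps {x} Hm cmp n)"
    if "c \<in> cycle_reps Ob Hm cmp n" for c
    using that diag_part_bdry bdry_from_diag_parts by (auto simp: cycle_reps_def)
  then show ?thesis
    by (auto simp: kernel_def cycle_group_def diag_map_eq_one_iff simp del: one_sum_group)
qed

text \<open>... and it is onto: a family of classes is hit by the sum of representatives of its
  finitely many nontrivial members.\<close>

lemma diag_map_surj: "diag_map Ob Hm cmp n ` carrier (cycle_group Ob Hm cmp n) = carrier (HH_sum n)"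
proof
  show "diag_map Ob Hm cmp n ` carrier (cycle_group Ob Hm cmp n) \<subseteq> carrier (HH_sum n)"
    using diag_map_carrier by (auto simp: cycle_group_def)
  show "carrier (HH_sum n) \<subseteq> diag_map Ob Hm cmp n ` carrier (cycle_group Ob Hm cmp n)"
  proof
    fix u assume u: "u \<in> carrier (HH_sum n)"
    define Sp where "Sp = {x \<in> Ob. u x \<noteq> \<one>\<^bsub>HH {x} Hm cmp n\<^esub>}"
    have Sp: "finite Sp" "Sp \<subseteq> Ob" and uP: "u \<in> (\<Pi>\<^sub>E x\<in>Ob. carrier (HH {x} Hm cmp n))"
      using u by (auto simp: carrier_HH_sum Sp_def)
    have "\<forall>x\<in>Ob. \<exists>c. c \<in> cycle_reps {x} Hm cmp n \<and> hclass {x} Hm cmp n c = u x"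
    proof
      fix x assume x: "x \<in> Ob"
      then have "u x \<in> carrier (HH {x} Hm cmp n)" using uP by (simp add: PiE_iff)
      then show "\<exists>c. c \<in> cycle_reps {x} Hm cmp n \<and> hclass {x} Hm cmp n c = u x"
        using lin_cat.HH_carrier[OF lin_cat_single[OF x], of n] by auto
    qed
    then obtain C where C: "\<forall>x\<in>Ob. C x \<in> cycle_reps {x} Hm cmp n \<and> hclass {x} Hm cmp n (C x) = u x"
      by (rule bchoice[elim_format]) blast
    define c where "c = (\<Sum>x\<in>Sp. C x)"
    have "c \<in> cycle_reps Ob Hm cmp n"
      unfolding c_def
    proof (rule sum_mem_closed)
      fix x assume "x \<in> Sp"
      then show "C x \<in> cycle_reps Ob Hm cmp n" using Sp C cycle_reps_mono[of "{x}" Ob] by blast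
    qed (simp_all add: cycle_reps_0 cycle_reps_add)
    moreover have "diag_map Ob Hm cmp n c y = u y" for y
    proof (cases "y \<in> Ob")
      case True
      have "diag_part y c = (if y \<in> Sp then C y else 0)"
        unfolding c_def using Sp C by (intro diag_part_sum_single[where Hm=Hm and n=n]) (auto simp: cycle_reps_def)
      then show ?thesis
        using True C lin_cat.HH_one[OF lin_cat_single[OF True]] by (auto simp: diag_map_def Sp_def)
    next
      case False
      then show ?thesis using uP by (simp add: diag_map_def PiE_def extensional_def)
    qed
    ultimately show "u \<in> diag_map Ob Hm cmp n ` carrier (cycle_group Ob Hm cmp n)"
      by (auto simp: cycle_group_def intro!: image_eqI[of _ _ c])
  qed
qed

theorem HH_iso_HH_sum: "HH Ob Hm cmp n \<cong> HH_sum n"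
proof (rule iso_of_common_kernel)
  show "group_hom (cycle_group Ob Hm cmp n) (HH Ob Hm cmp n) (hclass Ob Hm cmp n)"
    by (simp add: group_hom_def group_hom_axioms_def group_cycle_group group_HH hclass_hom)
  show "group_hom (cycle_group Ob Hm cmp n) (HH_sum n) (diag_map Ob Hm cmp n)"
    by (simp add: group_hom_def group_hom_axioms_def group_cycle_group group_HH_sum diag_map_hom)
qed (simp_all add: hclass_surj diag_map_surj hclass_kernel diag_map_kernel)

end

theorem lemma4p1:
  fixes Ob :: "'o set" and Hm :: "'o \<Rightarrow> 'o \<Rightarrow> 'm monoid"
    and cmp :: "'o \<Rightarrow> 'o \<Rightarrow> 'o \<Rightarrow> 'm \<Rightarrow> 'm \<Rightarrow> 'm" and idm :: "'o \<Rightarrow> 'm"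
  assumes "linear_category Ob Hm cmp idm"
    and "upper_triangular Ob Hm"
  shows "HH Ob Hm cmp i \<cong> sum_group Ob (\<lambda>x. HH_endo Hm cmp x i)"
proof -
  interpret upper_tri_cat Ob Hm cmp idm
    using assms by (simp add: upper_tri_cat_def upper_tri_cat_axioms_def lin_cat_def)
  show ?thesis using HH_iso_HH_sum[of i] by (simp add: HH_endo_def)
qed

end
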